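(* Let $r\ge2$ be an integer not divisible by $4$, $K\subset S^3$ an oriented zero-framed knot, and $M=S^3_0(K)$. For $\alpha\in\mathbb C\setminus\mathbb Z$ let $\omega_\alpha\in H^1(M;\mathbb C/2\mathbb Z)$ be the class whose value on the positive meridian of $K$ is $\alpha\bmod 2$. If $r$ is odd, then $$\lim_{\alpha\to0}[r\alpha]^2\,\mathrm N_r(M,\omega_\alpha)=D^2\,\mathrm{WRT}_r(M).$$ If $r$ is even, then $$\lim_{\alpha\to0}[r\alpha]^2\,\mathrm N_r(M,\omega_\alpha)=2D^2\,\mathrm{WRT}_r(M,\omega_0),\qquad \lim_{\alpha\to1}[r\alpha]^2\,\mathrm N_r(M,\omega_\alpha)=2D^2\,\mathrm{WRT}_r(M,\omega_1),$$ where $\omega_i\in H^1(M;\mathbb Z/2\mathbb Z)$ is the class whose value on the meridian of $K$ is $i\in\{0,1\}$.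
   Context: Notation: $\xi=e^{\pi i/r}$, $\xi^z:=e^{\pi iz/r}$, $\{z\}:=\xi^z-\xi^{-z}$, $[z]:=\{z\}/\{1\}$, $H_r:=\{-(r-1),-(r-3),\dots,r-3,r-1\}$, $D:=\sqrt{r/2}\,(\sin(\pi/r))^{-1}$. Let $U=U^H_\xi(\mathfrak{sl}_2)$ be generated by $E,F,H,K^{\pm1}$ with $KEK^{-1}=\xi^2E$, $KFK^{-1}=\xi^{-2}F$, $[E,F]=\frac{K-K^{-1}}{\xi-\xi^{-1}}$, $HK=KH$, $[H,E]=2E$, $[H,F]=-2F$, coproduct $\Delta E=1\otimes E+E\otimes K$, $\Delta F=K^{-1}\otimes F+F\otimes1$, $\Delta K=K\otimes K$, $\Delta H=H\otimes1+1\otimes H$, antipode $S(E)=-EK^{-1}$, $S(F)=-KF$, $S(K)=K^{-1}$, $S(H)=-H$. Let $\mathcal C$ be the category of finite-dimensional $U$-modules with $H$ diagonalizable, $K=\xi^H$, $E^r=F^r=0$, made ribbon by the braiding $\tau\circ R$, $R=\xi^{H\otimes H/2}\sum_{n=0}^{r-1}\frac{\{1\}^{2n}}{\{n\}!}\xi^{n(n-1)/2}E^n\otimes F^n$ ($\{n\}!=\{1\}\cdots\{n\}$), twist the action of $\theta^{-1}$, $\theta=K^{r-1}\sum_{n=0}^{r-1}\frac{\{1\}^{2n}}{\{n\}!}\xi^{n(n-1)/2}S(F^n)\xi^{-H^2/2}E^n$, standard left duality and right duality $1\mapsto\sum_iv_i^*\otimes K^{r-1}v_i$, $v\otimes f\mapsto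 f(K^{1-r}v)$; let $\mathcal F$ be its Reshetikhin–Turaev functor. Modules: $S_n$ ($0\le n\le r-1$) has basis $s_0,\dots,s_n$ with $Hs_i=(n-2i)s_i$, $Fs_i=s_{i+1}$, $Es_0=0$, $Es_i=\frac{\{i\}\{n+1-i\}}{\{1\}^2}s_{i-1}$; for $\alpha\in\mathbb C$, $V_\alpha$ is $r$-dimensional with basis $v_0,\dots,v_{r-1}$, $Hv_i=(\alpha+r-1-2i)v_i$, $Ev_i=\frac{\{i\}\{i-\alpha\}}{\{1\}^2}v_{i-1}$, $Fv_i=v_{i+1}$ ($Fv_{r-1}=0$). Present $K$ as the closure of a $(1,1)$-tangle $T$; for $V\in\{S_n,V_\alpha\}$ let $T(V)\in\mathbb C$ be defined by $\mathcal F(T)=T(V)\,\mathrm{Id}_V$. For $\alpha\notin\mathbb Z$ the CGP invariant of $(M,\omega_\alpha)$ is given by $[r\alpha]^2\,\mathrm N_r(M,\omega_\alpha)=\sum_{k\in H_r}\frac{\{\alpha+k\}^2}{\{1\}^2}T(V_{\alpha+k})$. The WRT invariants are $\mathrm{WRT}_r(M)=D^{-2}\sum_{j=0}^{r-2}\frac{\{j+1\}^2}{\{1\}^2}T(S_j)$ and, for $i\in\{0,1\}$, $\mathrm{WRT}_r(M,\omega_i)=D^{-2}\sum_{0\le j\le r-2,\ j\equiv i\ (2)}\frac{\{j+1\}^2}{\{1\}^2}T(S_j)$. *)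

theory Defs
  imports Complex_Main
begin

text \<open>xi r z = e^(pi i z / r), curly r z = {z}, qnum r z = [z].\<close>

definition xi :: "nat \<Rightarrow> complex \<Rightarrow> complex" where
  "xi r z = exp (complex_of_real pi * \<i> * z / of_nat r)"

definition curly :: "nat \<Rightarrow> complex \<Rightarrow> complex" where
  "curly r z = xi r z - xi r (- z)"

definition qnum :: "nat \<Rightarrow> complex \<Rightarrow> complex" where
  "qnum r z = curly r z / curly r 1"

definition qfact :: "nat \<Rightarrow> nat \<Rightarrow> complex" where
  "qfact r n = (\<Prod>k=1..n. curly r (of_nat k))"

definition Dconst :: "nat \<Rightarrow> real" where
  "Dconst r = sqrt (real r / 2) / sin (pi / real r)"

text \<open>A module of the relevant shape is encoded as (d, h, e): basis b_0..b_(d-1),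
  H b_i = h i * b_i, E b_i = e i * b_(i-1) (E b_0 = 0), F b_i = b_(i+1) (F b_(d-1) = 0).\<close>

type_synonym wmod = "nat \<times> (nat \<Rightarrow> complex) \<times> (nat \<Rightarrow> complex)"

definition Smod :: "nat \<Rightarrow> nat \<Rightarrow> wmod" where
  "Smod r n = (n + 1, \<lambda>i. of_nat n - 2 * of_nat i,
      \<lambda>i. curly r (of_nat i) * curly r (of_nat n + 1 - of_nat i) / (curly r 1)^2)"

definition Vmod :: "nat \<Rightarrow> complex \<Rightarrow> wmod" where
  "Vmod r \<alpha> = (r, \<lambda>i. \<alpha> + of_nat r - 1 - 2 * of_nat i,
      \<lambda>i. curly r (of_nat i) * curly r (of_nat i - \<alpha>) / (curly r 1)^2)"

definition mdim :: "wmod \<Rightarrow> nat" where "mdim M = fst M"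
definition mwt :: "wmod \<Rightarrow> nat \<Rightarrow> complex" where "mwt M = fst (snd M)"
definition mE :: "wmod \<Rightarrow> nat \<Rightarrow> complex" where "mE M = snd (snd M)"

text \<open>Coefficient of b_(i-n) in E^n b_i.\<close>
definition Epow :: "wmod \<Rightarrow> nat \<Rightarrow> nat \<Rightarrow> complex" where
  "Epow M n i = (if n \<le> i then (\<Prod>k<n. mE M (i - k)) else 0)"

definition Rcoef :: "nat \<Rightarrow> nat \<Rightarrow> complex" where
  "Rcoef r n = (curly r 1)^(2*n) / qfact r n * xi r (of_nat (n * (n - 1)) / 2)"

text \<open>Braiding c = tau o R on M (x) M: cmat r M a b i j is the coefficient of
  b_a (x) b_b in c(b_i (x) b_j).\<close>
definition cmat :: "nat \<Rightarrow> wmod \<Rightarrow> nat \<Rightarrow> nat \<Rightarrow> nat \<Rightarrow> nat \<Rightarrow> complex" where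
  "cmat r M a b i j =
     (if a < mdim M \<and> b < mdim M \<and> i < mdim M \<and> j < mdim M \<and> j \<le> a \<and> i = b + (a - j) \<and> a - j < r
      then Rcoef r (a - j) * Epow M (a - j) i * xi r (mwt M b * mwt M a / 2)
      else 0)"

definition cinv :: "nat \<Rightarrow> wmod \<Rightarrow> nat \<Rightarrow> nat \<Rightarrow> nat \<Rightarrow> nat \<Rightarrow> complex" where
  "cinv r M = (SOME B. \<forall>a<mdim M. \<forall>b<mdim M. \<forall>i<mdim M. \<forall>j<mdim M.
       (\<Sum>x<mdim M. \<Sum>y<mdim M. B a b x y * cmat r M x y i j) = (if a = i \<and> b = j then 1 else 0))"

text \<open>Basis of M^(x n): index lists of length n with entries < d.\<close>
definition idx :: "nat \<Rightarrow> nat \<Rightarrow> nat list set" where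
  "idx d n = {l. length l = n \<and> set l \<subseteq> {..<d}}"

text \<open>A braid word is a list of nonzero integers; g > 0 stands for sigma_(g) and
  g < 0 for sigma_(-g)^(-1), sigma_k crossing strands k and k+1 (strands numbered 1..n).
  genop gives the matrix entry (out, inp) of the corresponding operator.\<close>
definition genop :: "nat \<Rightarrow> wmod \<Rightarrow> int \<Rightarrow> nat list \<Rightarrow> nat list \<Rightarrow> complex" where
  "genop r M g out inp =
     (let k = nat \<bar>g\<bar> - 1; A = (if g > 0 then cmat r M else cinv r M) in
      if (\<forall>m<length out. m \<noteq> k \<and> m \<noteq> k + 1 \<longrightarrow> out ! m = inp ! m)
      then A (out ! k) (out ! (k + 1)) (inp ! k) (inp ! (k + 1)) else 0)"

fun braidop :: "nat \<Rightarrow> wmod \<Rightarrow> nat \<Rightarrow> int list \<Rightarrow> nat list \<Rightarrow> nat list \<Rightarrow> complex" where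
  "braidop r M n [] out inp = (if out = inp then 1 else 0)"
| "braidop r M n (g # w) out inp =
     (\<Sum>y\<in>idx (mdim M) n. genop r M g out y * braidop r M n w y inp)"

text \<open>T(V) for the (1,1)-tangle obtained from the braid by closing strands 2..n on the
  right (right partial trace: (id (x) K^(1-r)) then trace), read off as the coefficient
  of b_0 in the image of b_0.\<close>
definition Tval :: "nat \<Rightarrow> nat \<Rightarrow> int list \<Rightarrow> wmod \<Rightarrow> complex" where
  "Tval r n w M = (\<Sum>l\<in>idx (mdim M) (n - 1).
      braidop r M n w (0 # l) (0 # l) *
      (\<Prod>m<n - 1. xi r ((1 - of_nat r) * mwt M (l ! m))))"

definition tr :: "nat \<Rightarrow> nat \<Rightarrow> nat \<Rightarrow> nat" where
  "tr a b x = (if x = a then b else if x = b then a else x)"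

definition braid_perm :: "int list \<Rightarrow> nat \<Rightarrow> nat" where
  "braid_perm w = foldr (\<lambda>g p. tr (nat \<bar>g\<bar> - 1) (nat \<bar>g\<bar>) \<circ> p) w id"

definition valid_braid :: "nat \<Rightarrow> int list \<Rightarrow> bool" where
  "valid_braid n w \<longleftrightarrow> n \<ge> 1 \<and> (\<forall>g\<in>set w. g \<noteq> 0 \<and> \<bar>g\<bar> \<le> int n - 1)"

text \<open>The closure of the braid is a knot (one component) iff its permutation is an n-cycle.\<close>
definition knot_braid :: "nat \<Rightarrow> int list \<Rightarrow> bool" where
  "knot_braid n w \<longleftrightarrow> valid_braid n w \<and> {..<n} \<subseteq> range (\<lambda>m. (braid_perm w ^^ m) 0)"

definition writhe :: "int list \<Rightarrow> int" where
  "writhe w = sum_list (map sgn w)"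

definition Hr :: "nat \<Rightarrow> int set" where
  "Hr r = (\<lambda>m. 2 * int m - (int r - 1)) ` {..<r}"

text \<open>CGP invariant N_r(M, omega_alpha), M = 0-surgery on the knot (closure of braid).\<close>
definition CGP :: "nat \<Rightarrow> nat \<Rightarrow> int list \<Rightarrow> complex \<Rightarrow> complex" where
  "CGP r n w \<alpha> = (\<Sum>k\<in>Hr r. (curly r (\<alpha> + of_int k))^2 / (curly r 1)^2
                    * Tval r n w (Vmod r (\<alpha> + of_int k))) / (qnum r (of_nat r * \<alpha>))^2"

definition WRT :: "nat \<Rightarrow> nat \<Rightarrow> int list \<Rightarrow> complex" where
  "WRT r n w = inverse ((complex_of_real (Dconst r))^2) *
     (\<Sum>j\<in>{0..r-2}. (curly r (of_nat j + 1))^2 / (curly r 1)^2 * Tval r n w (Smod r j))"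

definition WRTspin :: "nat \<Rightarrow> nat \<Rightarrow> int list \<Rightarrow> nat \<Rightarrow> complex" where
  "WRTspin r n w i = inverse ((complex_of_real (Dconst r))^2) *
     (\<Sum>j\<in>{j\<in>{0..r-2}. j mod 2 = i}. (curly r (of_nat j + 1))^2 / (curly r 1)^2 * Tval r n w (Smod r j))"

end

(* For \<alpha> \<notin> \<int> the normalized invariant [r\<alpha>]^2 N_r(M, \<omega>_\<alpha>) is the finite sum
   \<Sigma>_(k \<in> H_r) {\<alpha>+k}^2/{1}^2 T(V_(\<alpha>+k)), which is continuous in \<alpha>; so its limit at
   \<alpha> = \<delta> \<in> {0, 1} is the same sum at \<alpha> = \<delta>.  For an integer c with 0 < |c| < r the module
   V_c contains the submodule spanned by b_q, b_(q+1), ..., where q \<equiv> c (mod r), and the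
   quotient is S_(q-1), for c > 0 tensored with a one-dimensional module of weight r.  As the
   braid closes up to a knot, its permutation is an n-cycle through the open strand, so the
   partial trace T only sees this quotient; the one-dimensional factor drops out because the
   writhe vanishes and n is odd.  Hence T(V_c) = T(S_(c-1)) or T(S_(c+r-1)), the weights
   c = 0 and c = r contribute nothing, and sorting j by parity gives WRT_r(M) for odd r and
   twice WRT_r(M, \<omega>_\<delta>) for even r.  Negative crossings use the inverse braiding, whose
   matrix is computed explicitly from the vanishing of a q-binomial sum. *)

theory Submission
  imports Defs "HOL-Combinatorics.Cycles" "HOL-Analysis.Complex_Transcendental"
begin

lemma xi_add: "xi r (a + b) = xi r a * xi r b"
  unfolding xi_def by (simp add: add_divide_distrib distrib_left exp_add[symmetric] algebra_simps)

lemma xi_nonzero [simp]: "xi r a \<noteq> 0"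
  unfolding xi_def by simp

lemma xi_0 [simp]: "xi r 0 = 1"
  unfolding xi_def by simp

lemma xi_minus: "xi r (- a) = inverse (xi r a)"
  by (metis add.right_inverse xi_add xi_nonzero xi_0 inverse_unique)

lemma xi_power: "(xi r a) ^ m = xi r (of_nat m * a)"
  by (induction m) (simp_all add: xi_add distrib_right)

lemma xi_of_nat_r_mult: "r > 0 \<Longrightarrow> xi r (of_nat r * of_nat k) = (-1) ^ k"
  using xi_power[of r "of_nat r" k] by (simp add: xi_def mult.commute exp_pi_i')

lemma xi_add_of_nat_r: "r > 0 \<Longrightarrow> xi r (a + of_nat r) = - xi r a"
  using xi_of_nat_r_mult[of r 1] by (simp add: xi_add)

lemma xi_eq_1_iff:
  assumes "r > 0"
  shows "xi r z = 1 \<longleftrightarrow> (\<exists>k::int. z = 2 * of_nat r * of_int k)"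
  unfolding xi_def exp_eq_1 using assms by (auto simp: field_simps complex_eq_iff)

lemma curly_minus: "curly r (- z) = - curly r z"
  unfolding curly_def by simp

lemma curly_0 [simp]: "curly r 0 = 0"
  unfolding curly_def by simp

lemma curly_add_of_nat_r: "r > 0 \<Longrightarrow> curly r (z + of_nat r) = - curly r z"
  unfolding curly_def using xi_add_of_nat_r[of r z] xi_add_of_nat_r[of r "- z - of_nat r"]
  by (simp add: algebra_simps)

lemma curly_of_nat_r: "r > 0 \<Longrightarrow> curly r (of_nat r) = 0"
  using curly_add_of_nat_r[of r 0] by simp

lemma curly_add: "curly r (a + b) = xi r b * curly r a + xi r (- a) * curly r b"
  unfolding curly_def by (simp add: xi_add[symmetric] algebra_simps)

lemma curly_eq_0_iff:
  assumes "r > 0"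
  shows "curly r z = 0 \<longleftrightarrow> (\<exists>k::int. z = of_nat r * of_int k)"
proof -
  have "curly r z = 0 \<longleftrightarrow> xi r z * xi r z = 1"
    unfolding curly_def xi_minus using xi_nonzero[of r z]
    by (metis eq_iff_diff_eq_0 inverse_unique right_inverse)
  also have "\<dots> \<longleftrightarrow> xi r (2 * z) = 1"
    by (simp only: mult_2 xi_add)
  also have "\<dots> \<longleftrightarrow> (\<exists>k::int. z = of_nat r * of_int k)"
    using xi_eq_1_iff[OF assms, of "2 * z"] by auto
  finally show ?thesis .
qed

lemma curly_of_nat_nonzero:
  assumes "0 < k" "k < r"
  shows "curly r (of_nat k) \<noteq> 0"
proof
  assume "curly r (of_nat k) = 0"
  then obtain j :: int where "complex_of_nat k = of_nat r * of_int j"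
    using curly_eq_0_iff[of r "of_nat k"] assms by auto
  then have "int k = int r * j"
    by (metis of_int_eq_iff of_int_mult of_int_of_nat_eq)
  then have "int r dvd int k" by simp
  with assms show False
    using zdvd_imp_le by fastforce
qed

lemma qfact_0 [simp]: "qfact r 0 = 1"
  by (simp add: qfact_def)

lemma qfact_Suc: "qfact r (Suc m) = qfact r m * curly r (of_nat (Suc m))"
  by (simp add: qfact_def prod.nat_ivl_Suc')

lemma of_nat_mult_pred: "(of_nat (k * (k - 1)) :: complex) = of_nat k * (of_nat k - 1)"
  by (cases k) (simp_all add: algebra_simps)

section \<open>Inverting the R-matrix\<close>

definition qbinom_sum :: "nat \<Rightarrow> nat \<Rightarrow> complex \<Rightarrow> complex" where
  "qbinom_sum r s x = (\<Sum>m=0..s. (-1) ^ m * x ^ m / (qfact r m * qfact r (s - m)))"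

text \<open>The q-Pascal rule \<open>{s+1} = \<xi>^m {s+1-m} + \<xi>^(m-s-1) {m}\<close> splits each term in two; the
  two halves telescope into the shifted sum.\<close>

lemma qbinom_sum_Suc:
  assumes "Suc s < r"
  shows "curly r (of_nat (Suc s)) * qbinom_sum r (Suc s) x
           = (1 - x * xi r (- of_nat s)) * qbinom_sum r s (x * xi r 1)"
proof -
  define A where "A m = (-1) ^ m * x ^ m * (xi r (of_nat m) * curly r (of_nat (Suc s - m)))
                          / (qfact r m * qfact r (Suc s - m))" for m
  define B where "B m = (-1) ^ m * x ^ m * (xi r (- of_nat (Suc s - m)) * curly r (of_nat m))
                          / (qfact r m * qfact r (Suc s - m))" for m
  define T where "T m = (-1) ^ m * (x * xi r 1) ^ m / (qfact r m * qfact r (s - m))" for m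
  have power_shift: "(x * xi r 1) ^ m = x ^ m * xi r (of_nat m)" for m
    by (simp add: power_mult_distrib xi_power)
  have split: "curly r (of_nat (Suc s)) * ((-1) ^ m * x ^ m / (qfact r m * qfact r (Suc s - m)))
                 = A m + B m" if "m \<le> Suc s" for m
  proof -
    have "curly r (of_nat (Suc s)) = curly r (of_nat (Suc s - m) + of_nat m)"
      using that by (simp add: of_nat_diff[symmetric])
    then show ?thesis
      unfolding A_def B_def curly_add by (simp add: add_divide_distrib algebra_simps)
  qed
  have A_eq: "A m = T m" if "m \<le> s" for m
  proof -
    have "qfact r (Suc s - m) = qfact r (s - m) * curly r (of_nat (Suc s - m))"
      using that by (simp add: Suc_diff_le qfact_Suc)
    moreover have "curly r (of_nat (Suc s - m)) \<noteq> 0"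
      using that assms by (intro curly_of_nat_nonzero) auto
    ultimately show ?thesis
      unfolding A_def T_def power_shift by (simp add: field_simps)
  qed
  have B_eq: "B (Suc m) = - (x * xi r (- of_nat s)) * T m" if "m \<le> s" for m
  proof -
    have "curly r (of_nat (Suc m)) \<noteq> 0"
      using that assms by (intro curly_of_nat_nonzero) auto
    moreover have "xi r (- of_nat (Suc s - Suc m)) = xi r (- of_nat s) * xi r (of_nat m)"
      using that by (simp add: of_nat_diff xi_add[symmetric])
    ultimately show ?thesis
      unfolding B_def T_def qfact_Suc power_shift by (simp add: field_simps)
  qed
  have "curly r (of_nat (Suc s)) * qbinom_sum r (Suc s) x = (\<Sum>m=0..Suc s. A m) + (\<Sum>m=0..Suc s. B m)"
    unfolding qbinom_sum_def sum_distrib_left sum.distrib[symmetric] using split by simp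
  also have "(\<Sum>m=0..Suc s. A m) = (\<Sum>m=0..s. T m)"
    using A_eq by (simp add: A_def)
  also have "(\<Sum>m=0..Suc s. B m) = - (x * xi r (- of_nat s)) * (\<Sum>m=0..s. T m)"
    unfolding sum.atLeast0_atMost_Suc_shift sum_distrib_left using B_eq by (simp add: B_def)
  also have "(\<Sum>m=0..s. T m) = qbinom_sum r s (x * xi r 1)"
    by (simp add: T_def qbinom_sum_def)
  finally show ?thesis
    by (simp add: algebra_simps)
qed

lemma qbinom_sum_root:
  assumes "1 \<le> s" "s < r"
  shows "qbinom_sum r s (xi r (1 - of_nat s)) = 0"
  using assms
proof (induction s rule: dec_induct)
  case base
  show ?case by (simp add: qbinom_sum_def qfact_def)
next
  case (step s)
  have "curly r (of_nat (Suc s)) * qbinom_sum r (Suc s) (xi r (1 - of_nat (Suc s)))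
      = (1 - xi r (1 - of_nat (Suc s)) * xi r (- of_nat s))
          * qbinom_sum r s (xi r (1 - of_nat (Suc s)) * xi r 1)"
    using step.prems by (intro qbinom_sum_Suc) auto
  also have "xi r (1 - of_nat (Suc s)) * xi r 1 = xi r (1 - of_nat s)"
    by (simp add: xi_add[symmetric])
  also have "qbinom_sum r s (xi r (1 - of_nat s)) = 0"
    using step by auto
  finally show ?case
    using curly_of_nat_nonzero[of "Suc s" r] step.prems by simp
qed

definition Rinv_coef :: "nat \<Rightarrow> nat \<Rightarrow> complex" where
  "Rinv_coef r m = (-1) ^ m * (curly r 1) ^ (2 * m) / qfact r m * xi r (- of_nat (m * (m - 1)) / 2)"

lemma Rcoef_Rinv_coef_convolution:
  assumes "s < r"
  shows "(\<Sum>m=0..s. Rcoef r (s - m) * Rinv_coef r m) = (if s = 0 then 1 else 0)"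
proof (cases "s = 0")
  case True
  then show ?thesis by (simp add: Rcoef_def Rinv_coef_def)
next
  case False
  define c where "c = (curly r 1) ^ (2 * s) * xi r (of_nat (s * (s - 1)) / 2)"
  have summand: "Rcoef r (s - m) * Rinv_coef r m
                = c * ((-1) ^ m * (xi r (1 - of_nat s)) ^ m / (qfact r m * qfact r (s - m)))"
    if "m \<le> s" for m
  proof -
    have "(curly r 1) ^ (2 * (s - m)) * (curly r 1) ^ (2 * m) = (curly r 1) ^ (2 * s)"
    proof -
      have "2 * (s - m) + 2 * m = 2 * s" using that by simp
      then show ?thesis by (metis power_add)
    qed
    moreover have "of_nat ((s - m) * (s - m - 1)) / 2 + - of_nat (m * (m - 1)) / 2
                     = of_nat (s * (s - 1)) / 2 + of_nat m * (1 - of_nat s :: complex)"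
    proof -
      have diff: "(of_nat ((s - m) * (s - m - 1)) :: complex) = (of_nat s - of_nat m) * (of_nat s - of_nat m - 1)"
        using of_nat_mult_pred[of "s - m"] that by (simp add: of_nat_diff)
      show ?thesis
        unfolding diff of_nat_mult_pred[of m] of_nat_mult_pred[of s] by (simp add: field_simps)
    qed
    then have "xi r (of_nat ((s - m) * (s - m - 1)) / 2) * xi r (- of_nat (m * (m - 1)) / 2)
                 = xi r (of_nat (s * (s - 1)) / 2) * (xi r (1 - of_nat s)) ^ m"
      by (metis xi_add xi_power)
    ultimately show ?thesis
      unfolding Rcoef_def Rinv_coef_def c_def by (simp add: field_simps)
  qed
  have "(\<Sum>m=0..s. Rcoef r (s - m) * Rinv_coef r m) = c * qbinom_sum r s (xi r (1 - of_nat s))"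
    unfolding qbinom_sum_def sum_distrib_left using summand by simp
  with False assms qbinom_sum_root[of s r] show ?thesis
    by simp
qed

text \<open>Since the \<open>E^n \<otimes> F^n\<close> commute, \<open>R^(-1) = (\<Sigma> c'_n E^n \<otimes> F^n) \<xi>^(-H\<otimes>H/2)\<close> with
  \<open>c'_n = Rinv_coef r n\<close>, the coefficients inverse to \<open>c_n = Rcoef r n\<close> under convolution;
  composing with the flip gives the matrix below.\<close>

definition cinv_explicit :: "nat \<Rightarrow> wmod \<Rightarrow> nat \<Rightarrow> nat \<Rightarrow> nat \<Rightarrow> nat \<Rightarrow> complex" where
  "cinv_explicit r M i j a b =
     (if i < mdim M \<and> j < mdim M \<and> a < mdim M \<and> b < mdim M \<and> i \<le> b \<and> a \<le> j \<and> b - i = j - a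
      then Rinv_coef r (b - i) * Epow M (b - i) b * xi r (- (mwt M b * mwt M a / 2))
      else 0)"

lemma Epow_add:
  assumes "n \<le> i"
  shows "Epow M m (i - n) * Epow M n i = Epow M (m + n) i"
proof (cases "m + n \<le> i")
  case True
  have "(\<Prod>k<m. mE M (i - n - k)) * (\<Prod>k<n. mE M (i - k)) = (\<Prod>k<m + n. mE M (i - k))"
  proof (induction m)
    case (Suc m)
    then show ?case by (simp add: algebra_simps)
  qed simp
  with True assms show ?thesis
    unfolding Epow_def by simp
qed (use assms in \<open>auto simp: Epow_def\<close>)

lemma sum_square_antidiagonal:
  fixes f :: "nat \<Rightarrow> nat \<Rightarrow> 'a::comm_monoid_add"
  assumes support: "\<And>x y. x < d \<Longrightarrow> y < d \<Longrightarrow> f x y \<noteq> 0 \<Longrightarrow> x \<le> p \<and> y = q + (p - x) \<and> p - x \<le> s"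
    and "s \<le> p" "p < d" "q + s < d"
  shows "(\<Sum>x<d. \<Sum>y<d. f x y) = (\<Sum>m\<le>s. f (p - m) (q + m))"
proof -
  define g where "g m = (p - m, q + m)" for m
  have "(\<Sum>x<d. \<Sum>y<d. f x y) = (\<Sum>z\<in>{..<d} \<times> {..<d}. f (fst z) (snd z))"
    by (simp add: sum.cartesian_product case_prod_beta)
  also have "\<dots> = (\<Sum>z\<in>g ` {..s}. f (fst z) (snd z))"
  proof (rule sum.mono_neutral_right)
    show "g ` {..s} \<subseteq> {..<d} \<times> {..<d}"
      using assms(3,4) by (auto simp: g_def)
    show "\<forall>z\<in>{..<d} \<times> {..<d} - g ` {..s}. f (fst z) (snd z) = 0"
      using support by (force simp: g_def image_iff)
  qed simp
  also have "\<dots> = (\<Sum>m\<le>s. f (p - m) (q + m))"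
    using assms(2) by (subst sum.reindex) (auto simp: inj_on_def g_def)
  finally show ?thesis .
qed

lemma cinv_explicit_cmat:
  assumes "mdim M \<le> r" and "i' < mdim M" "j' < mdim M" "i < mdim M" "j < mdim M"
  shows "(\<Sum>x<mdim M. \<Sum>y<mdim M. cinv_explicit r M i' j' x y * cmat r M x y i j)
           = (if i' = i \<and> j' = j then 1 else 0)"
proof -
  have support: "i' \<le> y \<and> x \<le> j' \<and> y - i' = j' - x \<and> j \<le> x \<and> i = y + (x - j)"
    if "cinv_explicit r M i' j' x y * cmat r M x y i j \<noteq> 0" for x y
    using that unfolding cinv_explicit_def cmat_def by (auto split: if_splits)
  show ?thesis
  proof (cases "i' \<le> i \<and> j \<le> j' \<and> i - i' = j' - j")
    case False
    have zero: "cinv_explicit r M i' j' x y * cmat r M x y i j = 0" for x y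
    proof (rule ccontr)
      assume "cinv_explicit r M i' j' x y * cmat r M x y i j \<noteq> 0"
      from support[OF this] False show False by auto
    qed
    moreover have "\<not> (i' = i \<and> j' = j)" using False by auto
    ultimately show ?thesis by (simp only: zero sum.neutral_const if_False)
  next
    case True
    define s where "s = i - i'"
    have s: "i = i' + s" "j' = j + s" "s < r"
      using True assms by (auto simp: s_def)
    have "(\<Sum>x<mdim M. \<Sum>y<mdim M. cinv_explicit r M i' j' x y * cmat r M x y i j)
        = (\<Sum>m\<le>s. cinv_explicit r M i' j' (j' - m) (i' + m) * cmat r M (j' - m) (i' + m) i j)"
    proof (rule sum_square_antidiagonal)
      fix x y assume "cinv_explicit r M i' j' x y * cmat r M x y i j \<noteq> 0"
      with support[of x y] s show "x \<le> j' \<and> y = i' + (j' - x) \<and> j' - x \<le> s" by auto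
    qed (use s assms in auto)
    also have "\<dots> = (\<Sum>m\<le>s. Epow M s i * (Rcoef r (s - m) * Rinv_coef r m))"
    proof (rule sum.cong[OF refl])
      fix m assume "m \<in> {..s}"
      then have m: "m \<le> s" "s - m < r" "j \<le> j + s - m" "j + s - m < mdim M"
        using s assms by auto
      have "Epow M m (i' + m) * Epow M (s - m) i = Epow M s i"
        using Epow_add[of "s - m" i M m] m s by (simp add: algebra_simps)
      then show "cinv_explicit r M i' j' (j' - m) (i' + m) * cmat r M (j' - m) (i' + m) i j
                   = Epow M s i * (Rcoef r (s - m) * Rinv_coef r m)"
        unfolding cinv_explicit_def cmat_def using m assms s
        by (simp add: xi_minus field_simps)
    qed
    also have "\<dots> = (if i' = i \<and> j' = j then 1 else 0)"
      using Rcoef_Rinv_coef_convolution[OF \<open>s < r\<close>] s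
      by (simp add: sum_distrib_left[symmetric] atLeast0AtMost Epow_def)
    finally show ?thesis .
  qed
qed

lemma cmat_cinv_explicit:
  assumes "mdim M \<le> r" and "a' < mdim M" "b' < mdim M" "a < mdim M" "b < mdim M"
  shows "(\<Sum>x<mdim M. \<Sum>y<mdim M. cmat r M a' b' x y * cinv_explicit r M x y a b)
           = (if a' = a \<and> b' = b then 1 else 0)"
proof -
  have support: "y \<le> a' \<and> x = b' + (a' - y) \<and> x \<le> b \<and> a \<le> y \<and> b - x = y - a"
    if "cmat r M a' b' x y * cinv_explicit r M x y a b \<noteq> 0" for x y
    using that unfolding cinv_explicit_def cmat_def by (auto split: if_splits)
  show ?thesis
  proof (cases "a \<le> a' \<and> b' \<le> b \<and> a' - a = b - b'")
    case False
    have zero: "cmat r M a' b' x y * cinv_explicit r M x y a b = 0" for x y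
    proof (rule ccontr)
      assume "cmat r M a' b' x y * cinv_explicit r M x y a b \<noteq> 0"
      from support[OF this] False show False by auto
    qed
    moreover have "\<not> (a' = a \<and> b' = b)" using False by auto
    ultimately show ?thesis by (simp only: zero sum.neutral_const if_False)
  next
    case True
    define s where "s = a' - a"
    have s: "a' = a + s" "b = b' + s" "s < r"
      using True assms by (auto simp: s_def)
    define c where "c = Epow M s b * xi r (mwt M b' * mwt M a' / 2) * xi r (- (mwt M b * mwt M a / 2))"
    have "(\<Sum>x<mdim M. \<Sum>y<mdim M. cmat r M a' b' x y * cinv_explicit r M x y a b)
        = (\<Sum>m\<le>s. cmat r M a' b' (b - m) (a + m) * cinv_explicit r M (b - m) (a + m) a b)"
    proof (rule sum_square_antidiagonal)
      fix x y assume "cmat r M a' b' x y * cinv_explicit r M x y a b \<noteq> 0"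
      with support[of x y] s show "x \<le> b \<and> y = a + (b - x) \<and> b - x \<le> s" by auto
    qed (use s assms in auto)
    also have "\<dots> = (\<Sum>m\<le>s. c * (Rcoef r (s - m) * Rinv_coef r m))"
    proof (rule sum.cong[OF refl])
      fix m assume "m \<in> {..s}"
      then have m: "m \<le> s" and "s - m < r" using s by auto
      have "Epow M (s - m) (b - m) * Epow M m b = Epow M s b"
        using Epow_add[of m b M "s - m"] m s by simp
      then show "cmat r M a' b' (b - m) (a + m) * cinv_explicit r M (b - m) (a + m) a b
                   = c * (Rcoef r (s - m) * Rinv_coef r m)"
        unfolding cinv_explicit_def cmat_def c_def using m \<open>s - m < r\<close> assms s
        by (simp add: field_simps)
    qed
    also have "\<dots> = (if a' = a \<and> b' = b then 1 else 0)"
      using Rcoef_Rinv_coef_convolution[OF \<open>s < r\<close>] s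
      by (simp add: sum_distrib_left[symmetric] atLeast0AtMost Epow_def c_def xi_minus)
    finally show ?thesis .
  qed
qed

lemma left_inverse_eq_right_inverse:
  fixes B C E :: "'i \<Rightarrow> 'i \<Rightarrow> 'a::comm_semiring_1"
  assumes "finite D"
    and BC: "\<And>u v. u \<in> D \<Longrightarrow> v \<in> D \<Longrightarrow> (\<Sum>t\<in>D. B u t * C t v) = (if u = v then 1 else 0)"
    and CE: "\<And>u v. u \<in> D \<Longrightarrow> v \<in> D \<Longrightarrow> (\<Sum>t\<in>D. C u t * E t v) = (if u = v then 1 else 0)"
    and "u \<in> D" "v \<in> D"
  shows "B u v = E u v"
proof -
  have "E u v = (\<Sum>t\<in>D. (if u = t then 1 else 0) * E t v)"
    by (simp only: mult_delta_left sum.delta'[OF assms(1)] assms(4) if_True mult_1_left)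
  also have "\<dots> = (\<Sum>t\<in>D. (\<Sum>t'\<in>D. B u t' * C t' t) * E t v)"
    by (rule sum.cong[OF refl]) (simp only: BC[OF assms(4)])
  also have "\<dots> = (\<Sum>t'\<in>D. B u t' * (\<Sum>t\<in>D. C t' t * E t v))"
    by (simp only: sum_distrib_right sum_distrib_left mult.assoc) (rule sum.swap)
  also have "\<dots> = (\<Sum>t'\<in>D. B u t' * (if t' = v then 1 else 0))"
    by (rule sum.cong[OF refl]) (simp only: CE[OF _ assms(5)])
  also have "\<dots> = B u v"
    by (simp only: mult_delta_right sum.delta[OF assms(1)] assms(5) if_True mult_1_right)
  finally show ?thesis ..
qed

lemma cinv_eq_cinv_explicit:
  assumes "mdim M \<le> r" and "a < mdim M" "b < mdim M" "i < mdim M" "j < mdim M"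
  shows "cinv r M a b i j = cinv_explicit r M a b i j"
proof -
  define D where "D = {..<mdim M} \<times> {..<mdim M}"
  define mat where "mat A u v = A (fst u) (snd u) (fst v) (snd v)"
    for A :: "nat \<Rightarrow> nat \<Rightarrow> nat \<Rightarrow> nat \<Rightarrow> complex" and u v
  define inverts where "inverts B \<longleftrightarrow> (\<forall>a<mdim M. \<forall>b<mdim M. \<forall>i<mdim M. \<forall>j<mdim M.
      (\<Sum>x<mdim M. \<Sum>y<mdim M. B a b x y * cmat r M x y i j) = (if a = i \<and> b = j then 1 else 0))"
    for B
  have "inverts (cinv_explicit r M)"
    unfolding inverts_def using cinv_explicit_cmat[OF assms(1)] by blast
  then have "inverts (cinv r M)"
    unfolding cinv_def inverts_def[symmetric] by (rule someI[of inverts])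
  then have cinv: "(\<Sum>x<mdim M. \<Sum>y<mdim M. cinv r M a b x y * cmat r M x y i j)
                     = (if a = i \<and> b = j then 1 else 0)"
    if "a < mdim M" "b < mdim M" "i < mdim M" "j < mdim M" for a b i j
    using that unfolding inverts_def by blast
  have "mat (cinv r M) (a, b) (i, j) = mat (cinv_explicit r M) (a, b) (i, j)"
  proof (rule left_inverse_eq_right_inverse[where C = "mat (cmat r M)" and D = D])
    fix u v assume "u \<in> D" "v \<in> D"
    then obtain a1 b1 i1 j1 where uv: "u = (a1, b1)" "v = (i1, j1)"
      and bounds: "a1 < mdim M" "b1 < mdim M" "i1 < mdim M" "j1 < mdim M"
      by (auto simp: D_def)
    show "(\<Sum>t\<in>D. mat (cinv r M) u t * mat (cmat r M) t v) = (if u = v then 1 else 0)"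
      using cinv[OF bounds] unfolding uv mat_def D_def sum.cartesian_product' by simp
    show "(\<Sum>t\<in>D. mat (cmat r M) u t * mat (cinv_explicit r M) t v) = (if u = v then 1 else 0)"
      using cmat_cinv_explicit[OF assms(1) bounds] unfolding uv mat_def D_def sum.cartesian_product'
      by simp
  qed (use assms in \<open>simp_all add: D_def\<close>)
  then show ?thesis
    by (simp add: mat_def)
qed

section \<open>Braid words and their permutations\<close>

lemma mem_idx_iff: "x \<in> idx d n \<longleftrightarrow> length x = n \<and> (\<forall>m<n. x ! m < d)"
  unfolding idx_def by (auto simp: in_set_conv_nth subset_iff)

lemma finite_idx: "finite (idx d n)"
proof (rule finite_subset)
  show "idx d n \<subseteq> {xs. set xs \<subseteq> {..<d} \<and> length xs = n}"
    unfolding idx_def by auto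
qed (rule finite_lists_length_eq, simp)

lemma idx_mono: "q \<le> d \<Longrightarrow> idx q n \<subseteq> idx d n"
  unfolding idx_def by auto

lemma Cons_0_mem_idx: "0 < q \<Longrightarrow> 1 \<le> n \<Longrightarrow> l \<in> idx q (n - 1) \<Longrightarrow> 0 # l \<in> idx q n"
  unfolding idx_def by auto

lemma valid_braid_Cons:
  "valid_braid n (g # w) \<longleftrightarrow> valid_braid n w \<and> g \<noteq> 0 \<and> \<bar>g\<bar> \<le> int n - 1"
  unfolding valid_braid_def by auto

lemma braid_perm_Nil [simp]: "braid_perm [] = id"
  by (simp add: braid_perm_def)

lemma braid_perm_Cons: "braid_perm (g # w) = tr (nat \<bar>g\<bar> - 1) (nat \<bar>g\<bar>) \<circ> braid_perm w"
  by (simp add: braid_perm_def)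

lemma tr_eq_transpose: "tr a b = Transposition.transpose a b"
  unfolding tr_def by (auto simp: Transposition.transpose_def)

lemma tr_generator_less:
  assumes "g \<noteq> 0" "\<bar>g\<bar> \<le> int n - 1" "m < n"
  shows "tr (nat \<bar>g\<bar> - 1) (nat \<bar>g\<bar>) m < n"
proof -
  have "nat \<bar>g\<bar> < n"
    using assms by (subst nat_less_iff) auto
  with assms(3) show ?thesis
    by (auto simp: tr_def less_imp_diff_less)
qed

lemma braid_perm_permutes: "valid_braid n w \<Longrightarrow> braid_perm w permutes {..<n}"
proof (induction w)
  case Nil
  then show ?case using permutes_id[of "{..<n}"] by (simp add: id_def)
next
  case (Cons g w)
  then have "g \<noteq> 0" "\<bar>g\<bar> \<le> int n - 1" "valid_braid n w"
    by (auto simp: valid_braid_Cons)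
  then have "tr (nat \<bar>g\<bar> - 1) (nat \<bar>g\<bar>) permutes {..<n}" "braid_perm w permutes {..<n}"
    using Cons.IH unfolding tr_eq_transpose by (auto intro: permutes_swap_id)
  then show ?case
    unfolding braid_perm_Cons by (rule permutes_compose[rotated])
qed

lemma sign_braid_perm: "valid_braid n w \<Longrightarrow> sign (braid_perm w) = (-1) ^ length w"
proof (induction w)
  case (Cons g w)
  then have valid: "valid_braid n w" and "nat \<bar>g\<bar> - 1 \<noteq> nat \<bar>g\<bar>"
    by (auto simp: valid_braid_Cons)
  have "permutation (braid_perm w)"
    using braid_perm_permutes[OF valid] by (auto simp: permutation_permutes)
  then have "sign (braid_perm (g # w))
               = sign (Transposition.transpose (nat \<bar>g\<bar> - 1) (nat \<bar>g\<bar>)) * sign (braid_perm w)"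
    unfolding braid_perm_Cons tr_eq_transpose by (rule sign_compose[OF permutation_swap_id])
  with \<open>nat \<bar>g\<bar> - 1 \<noteq> nat \<bar>g\<bar>\<close> Cons.IH[OF valid] show ?case
    by (simp add: sign_swap_id)
qed simp

lemma sign_cycle_of_list: "distinct cs \<Longrightarrow> sign (cycle_of_list cs) = (-1) ^ (length cs - 1)"
proof (induction cs rule: cycle_of_list.induct)
  case (1 i j cs)
  have "sign (cycle_of_list (i # j # cs))
          = sign (Transposition.transpose i j) * sign (cycle_of_list (j # cs))"
    by (simp add: sign_compose permutation_swap_id permutation_of_cycle)
  also have "\<dots> = (-1) ^ (length (i # j # cs) - 1)"
    using 1 by (simp add: sign_swap_id)
  finally show ?case .
qed auto

lemma even_writhe_iff: "\<forall>g\<in>set w. g \<noteq> 0 \<Longrightarrow> even (writhe w) \<longleftrightarrow> even (length w)"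
proof (induction w)
  case (Cons g w)
  then have "sgn g = 1 \<or> sgn g = -1"
    by (auto simp: sgn_if)
  with Cons show ?case
    by (auto simp: writhe_def)
qed (simp add: writhe_def)

lemma sign_permutes_single_orbit:
  fixes p :: "nat \<Rightarrow> nat"
  assumes p: "p permutes {..<n}" and orbit: "{..<n} \<subseteq> range (\<lambda>m. (p ^^ m) 0)" and "1 \<le> n"
  shows "sign p = (-1) ^ (n - 1)"
proof -
  have perm: "permutation p"
    using p by (auto simp: permutation_permutes)
  define cs where "cs = support p 0"
  have "range (\<lambda>i. (p ^^ i) 0) \<subseteq> {..<n}"
    using permutes_in_image[OF permutes_funpow[OF p]] assms(3) by auto
  then have set_cs: "set cs = {..<n}"
    using support_set[OF perm] orbit by (auto simp: cs_def)
  have distinct: "distinct cs"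
    unfolding cs_def by (rule cycle_of_permutation[OF perm])
  have "p = cycle_of_list cs"
  proof
    fix x
    show "p x = cycle_of_list cs x"
    proof (cases "x \<in> set cs")
      case True
      then show ?thesis unfolding cs_def by (rule cycle_restrict[OF perm])
    next
      case False
      then show ?thesis
        using permutes_not_in[OF p] id_outside_supp[OF False] set_cs by simp
    qed
  qed
  then show ?thesis
    using sign_cycle_of_list[OF distinct] distinct_card[OF distinct] set_cs by simp
qed

text \<open>The permutation of a braid closing up to a knot is an \<open>n\<close>-cycle, of sign \<open>(-1)^(n-1)\<close>,
  while its sign is also \<open>(-1)^(length w)\<close>, and \<open>length w\<close> has the parity of the writhe.\<close>

lemma knot_braid_odd_strands:
  assumes "knot_braid n w" and "writhe w = 0"
  shows "odd n"
proof -
  have valid: "valid_braid n w" and orbit: "{..<n} \<subseteq> range (\<lambda>m. (braid_perm w ^^ m) 0)"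
    using assms(1) by (auto simp: knot_braid_def)
  have n: "1 \<le> n"
    using valid by (simp add: valid_braid_def)
  have "sign (braid_perm w) = (-1) ^ (n - 1)"
    using sign_permutes_single_orbit[OF braid_perm_permutes[OF valid] orbit n] .
  moreover have "sign (braid_perm w) = (-1) ^ length w"
    by (rule sign_braid_perm[OF valid])
  moreover have "even (length w)"
    using even_writhe_iff[of w] valid assms(2) by (simp add: valid_braid_def)
  ultimately have "(-1 :: int) ^ (n - 1) = 1"
    by simp
  then have "even (n - 1)"
    by (metis neg_one_odd_power one_neq_neg_one)
  with n show ?thesis
    by simp
qed

section \<open>Truncation to a quotient module\<close>

lemma Epow_eq_0:
  assumes "mE M q = 0" "i - n < q" "q \<le> i" "n \<le> i"
  shows "Epow M n i = 0"
proof -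
  have "i - q \<in> {..<n}" "mE M (i - (i - q)) = 0"
    using assms by auto
  then show ?thesis
    unfolding Epow_def using assms(4) by (auto intro: prod_zero)
qed

lemma Epow_cong:
  assumes "\<And>t. 0 < t \<Longrightarrow> t \<le> i \<Longrightarrow> mE V t = mE W t"
  shows "Epow V n i = Epow W n i"
  unfolding Epow_def using assms by (auto intro!: prod.cong)

text \<open>If \<open>E b_q = 0\<close> then \<open>b_q, b_(q+1), \<dots>\<close> span a submodule; the braiding and its inverse map
  \<open>(submodule) \<otimes> V\<close> into \<open>V \<otimes> (submodule)\<close> and \<open>V \<otimes> (submodule)\<close> into \<open>(submodule) \<otimes> V\<close>.\<close>

lemma cmat_nonzero_submodule:
  assumes "cmat r V o1 o2 i1 i2 \<noteq> 0" and E: "q < mdim V \<Longrightarrow> mE V q = 0"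
  shows "(q \<le> i1 \<longrightarrow> q \<le> o2) \<and> (q \<le> i2 \<longrightarrow> q \<le> o1)"
proof -
  from assms(1) have entry: "i2 \<le> o1" "i1 = o2 + (o1 - i2)" "i1 < mdim V" "Epow V (o1 - i2) i1 \<noteq> 0"
    unfolding cmat_def by (auto split: if_splits)
  show ?thesis
  proof (intro conjI impI)
    assume "q \<le> i1"
    show "q \<le> o2"
    proof (rule ccontr)
      assume "\<not> q \<le> o2"
      then have "Epow V (o1 - i2) i1 = 0"
        using \<open>q \<le> i1\<close> entry E by (intro Epow_eq_0) auto
      with entry(4) show False ..
    qed
  qed (use entry in simp)
qed

lemma cinv_explicit_nonzero_submodule:
  assumes "cinv_explicit r V o1 o2 i1 i2 \<noteq> 0" and E: "q < mdim V \<Longrightarrow> mE V q = 0"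
  shows "(q \<le> i1 \<longrightarrow> q \<le> o2) \<and> (q \<le> i2 \<longrightarrow> q \<le> o1)"
proof -
  from assms(1) have entry: "o1 \<le> i2" "i1 \<le> o2" "i2 < mdim V" "Epow V (i2 - o1) i2 \<noteq> 0"
    unfolding cinv_explicit_def by (auto split: if_splits)
  show ?thesis
  proof (intro conjI impI)
    assume "q \<le> i2"
    show "q \<le> o1"
    proof (rule ccontr)
      assume "\<not> q \<le> o1"
      then have "Epow V (i2 - o1) i2 = 0"
        using \<open>q \<le> i2\<close> entry E by (intro Epow_eq_0) auto
      with entry(4) show False ..
    qed
  qed (use entry in simp)
qed

lemma genop_nonzeroD:
  assumes "genop r M g out inp \<noteq> 0"
  shows "\<forall>m<length out. m \<noteq> nat \<bar>g\<bar> - 1 \<and> m \<noteq> nat \<bar>g\<bar> - 1 + 1 \<longrightarrow> out ! m = inp ! m"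
    and "(if g > 0 then cmat r M else cinv r M) (out ! (nat \<bar>g\<bar> - 1)) (out ! (nat \<bar>g\<bar> - 1 + 1))
            (inp ! (nat \<bar>g\<bar> - 1)) (inp ! (nat \<bar>g\<bar> - 1 + 1)) \<noteq> 0"
  using assms unfolding genop_def Let_def by (auto split: if_splits)

lemma genop_submodule:
  assumes "mdim V \<le> r" and E: "q < mdim V \<Longrightarrow> mE V q = 0"
    and out: "out \<in> idx (mdim V) n" and inp: "inp \<in> idx (mdim V) n"
    and g: "g \<noteq> 0" "\<bar>g\<bar> \<le> int n - 1"
    and nonzero: "genop r V g out inp \<noteq> 0" and "m < n" and "q \<le> inp ! m"
  shows "q \<le> out ! tr (nat \<bar>g\<bar> - 1) (nat \<bar>g\<bar>) m"
proof -
  define k where "k = nat \<bar>g\<bar> - 1"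
  have k: "nat \<bar>g\<bar> = k + 1" "k + 1 < n"
    using g by (auto simp: k_def)
  have bounds: "out ! k < mdim V" "out ! (k + 1) < mdim V" "inp ! k < mdim V" "inp ! (k + 1) < mdim V"
    using out inp k by (auto simp: mem_idx_iff)
  note nz = genop_nonzeroD[OF nonzero, unfolded k_def[symmetric]]
  have swap: "(q \<le> inp ! k \<longrightarrow> q \<le> out ! (k + 1)) \<and> (q \<le> inp ! (k + 1) \<longrightarrow> q \<le> out ! k)"
  proof (cases "g > 0")
    case True
    with nz(2) show ?thesis by (intro cmat_nonzero_submodule[OF _ E]) simp
  next
    case False
    with nz(2) show ?thesis
      using cinv_eq_cinv_explicit[OF assms(1) bounds]
      by (intro cinv_explicit_nonzero_submodule[OF _ E]) simp
  qed
  have "out ! m = inp ! m" if "m \<noteq> k" "m \<noteq> k + 1"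
    using nz(1) out that \<open>m < n\<close> by (auto simp: mem_idx_iff)
  with swap \<open>q \<le> inp ! m\<close> show ?thesis
    unfolding k(1) k_def[symmetric] by (auto simp: tr_def)
qed

lemma braidop_submodule:
  assumes "mdim V \<le> r" and E: "q < mdim V \<Longrightarrow> mE V q = 0" and "valid_braid n w"
  shows "out \<in> idx (mdim V) n \<Longrightarrow> inp \<in> idx (mdim V) n \<Longrightarrow> braidop r V n w out inp \<noteq> 0
           \<Longrightarrow> m < n \<Longrightarrow> q \<le> inp ! m \<Longrightarrow> q \<le> out ! braid_perm w m"
  using assms(3)
proof (induction w arbitrary: out)
  case (Cons g w)
  then have valid: "valid_braid n w" and g: "g \<noteq> 0" "\<bar>g\<bar> \<le> int n - 1"
    by (auto simp: valid_braid_Cons)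
  from Cons.prems(3) have "(\<Sum>y\<in>idx (mdim V) n. genop r V g out y * braidop r V n w y inp) \<noteq> 0"
    by simp
  then obtain y where y: "y \<in> idx (mdim V) n"
    and "genop r V g out y * braidop r V n w y inp \<noteq> 0"
    by (rule sum.not_neutral_contains_not_neutral)
  then have nonzero: "genop r V g out y \<noteq> 0" "braidop r V n w y inp \<noteq> 0"
    by auto
  have "braid_perm w m < n"
    using permutes_in_image[OF braid_perm_permutes[OF valid]] Cons.prems(4) by simp
  moreover have "q \<le> y ! braid_perm w m"
    using Cons.IH[OF y Cons.prems(2) nonzero(2) Cons.prems(4,5) valid] .
  ultimately show ?case
    using genop_submodule[OF assms(1) E Cons.prems(1) y g nonzero(1)] by (simp add: braid_perm_Cons)
qed (auto split: if_splits)

text \<open>\<open>truncation V W\<close>: \<open>W\<close> is the quotient of \<open>V\<close> by the submodule spanned by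
  \<open>b_q, b_(q+1), \<dots>\<close>, where \<open>q = mdim W\<close>.\<close>

definition truncation :: "wmod \<Rightarrow> wmod \<Rightarrow> bool" where
  "truncation V W \<longleftrightarrow> mdim W \<le> mdim V \<and> (\<forall>i<mdim W. mwt W i = mwt V i)
     \<and> (\<forall>i. 0 < i \<and> i < mdim W \<longrightarrow> mE W i = mE V i) \<and> (mdim W < mdim V \<longrightarrow> mE V (mdim W) = 0)"

lemma genop_truncation:
  assumes "mdim V \<le> r" and "truncation V W"
    and "out \<in> idx (mdim W) n" "inp \<in> idx (mdim W) n" and "g \<noteq> 0" "\<bar>g\<bar> \<le> int n - 1"
  shows "genop r W g out inp = genop r V g out inp"
proof -
  define k where "k = nat \<bar>g\<bar> - 1"
  have k: "nat \<bar>g\<bar> = k + 1" "k + 1 < n"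
    using assms(5,6) by (auto simp: k_def)
  have W: "mdim W \<le> mdim V" "\<And>i. i < mdim W \<Longrightarrow> mwt W i = mwt V i"
    "\<And>i. 0 < i \<Longrightarrow> i < mdim W \<Longrightarrow> mE W i = mE V i"
    using assms(2) by (auto simp: truncation_def)
  have bounds: "out ! k < mdim W" "out ! (k + 1) < mdim W" "inp ! k < mdim W" "inp ! (k + 1) < mdim W"
    using assms(3,4) k by (auto simp: mem_idx_iff)
  have Epow: "Epow W m x = Epow V m x" if "x < mdim W" for m x
    using that W(3) by (intro Epow_cong) auto
  have cmat: "cmat r W a b i j = cmat r V a b i j"
    if "a < mdim W" "b < mdim W" "i < mdim W" "j < mdim W" for a b i j
    unfolding cmat_def using that W(1) W(2)[of a] W(2)[of b] Epow by auto
  have cinv: "cinv r W a b i j = cinv r V a b i j"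
    if "a < mdim W" "b < mdim W" "i < mdim W" "j < mdim W" for a b i j
  proof -
    have "cinv_explicit r W a b i j = cinv_explicit r V a b i j"
      unfolding cinv_explicit_def using that W(1) W(2)[of i] W(2)[of j] Epow by auto
    moreover have "cinv r W a b i j = cinv_explicit r W a b i j"
      using that W(1) assms(1) by (intro cinv_eq_cinv_explicit) auto
    moreover have "cinv r V a b i j = cinv_explicit r V a b i j"
      using that W(1) assms(1) by (intro cinv_eq_cinv_explicit) auto
    ultimately show ?thesis
      by simp
  qed
  have "(if g > 0 then cmat r W else cinv r W) (out ! k) (out ! (k + 1)) (inp ! k) (inp ! (k + 1))
          = (if g > 0 then cmat r V else cinv r V) (out ! k) (out ! (k + 1)) (inp ! k) (inp ! (k + 1))"
    using cmat[OF bounds] cinv[OF bounds] by simp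
  then show ?thesis
    unfolding genop_def Let_def k_def[symmetric] by (simp only:)
qed

lemma braidop_truncation:
  assumes "mdim V \<le> r" and "truncation V W" and "valid_braid n w"
  shows "out \<in> idx (mdim W) n \<Longrightarrow> inp \<in> idx (mdim W) n
           \<Longrightarrow> braidop r W n w out inp = braidop r V n w out inp"
  using assms(3)
proof (induction w arbitrary: out)
  case (Cons g w)
  then have valid: "valid_braid n w" and g: "g \<noteq> 0" "\<bar>g\<bar> \<le> int n - 1"
    by (auto simp: valid_braid_Cons)
  have W: "mdim W \<le> mdim V" "mdim W < mdim V \<Longrightarrow> mE V (mdim W) = 0"
    using assms(2) by (auto simp: truncation_def)
  have sub: "idx (mdim W) n \<subseteq> idx (mdim V) n"
    using W(1) by (rule idx_mono)
  have out: "out \<in> idx (mdim V) n"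
    using Cons.prems(1) sub by auto
  have vanish: "genop r V g out y * braidop r V n w y inp = 0"
    if y: "y \<in> idx (mdim V) n - idx (mdim W) n" for y
  proof (rule ccontr)
    assume nonzero: "genop r V g out y * braidop r V n w y inp \<noteq> 0"
    from y obtain m where m: "m < n" "mdim W \<le> y ! m"
      by (auto simp: mem_idx_iff not_less)
    then have "mdim W \<le> out ! tr (nat \<bar>g\<bar> - 1) (nat \<bar>g\<bar>) m"
      using nonzero y by (intro genop_submodule[OF assms(1) W(2) out _ g]) auto
    moreover have "tr (nat \<bar>g\<bar> - 1) (nat \<bar>g\<bar>) m < n"
      using g m(1) by (rule tr_generator_less)
    ultimately show False
      using Cons.prems(1) by (auto simp: mem_idx_iff)
  qed
  have "braidop r V n (g # w) out inp
          = (\<Sum>y\<in>idx (mdim W) n. genop r V g out y * braidop r V n w y inp)"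
    using vanish sub by (simp add: sum.mono_neutral_right[OF finite_idx])
  also have "\<dots> = (\<Sum>y\<in>idx (mdim W) n. genop r W g out y * braidop r W n w y inp)"
    using genop_truncation[OF assms(1,2) Cons.prems(1) _ g] Cons.IH[OF _ Cons.prems(2) valid]
    by (intro sum.cong) auto
  finally show ?case
    by simp
qed simp

lemma permutes_invariant_subset_empty:
  fixes p :: "nat \<Rightarrow> nat"
  assumes p: "p permutes {..<n}" and orbit: "{..<n} \<subseteq> range (\<lambda>t. (p ^^ t) 0)"
    and S: "S \<subseteq> {..<n}" "p ` S \<subseteq> S" "0 \<notin> S"
  shows "S = {}"
proof (rule ccontr)
  assume "S \<noteq> {}"
  then obtain t where t: "(p ^^ t) 0 \<in> S"
    using S(1) orbit by blast
  have inj: "inj_on p {..<n}"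
    using permutes_inj_on[OF p] .
  have "p ` S = S"
    using card_image[OF inj_on_subset[OF inj S(1)]] S(1,2) finite_subset[OF S(1)]
    by (intro card_subset_eq) auto
  then have preimage: "x \<in> S" if "x < n" "p x \<in> S" for x
    using inj S(1) that by (auto simp: inj_on_def)
  have "(p ^^ t) 0 < n"
    using S(1) t by auto
  then have "(p ^^ s) 0 < n" for s
    using permutes_in_image[OF permutes_funpow[OF p, of s], of 0] by (cases "n = 0") auto
  then have "(p ^^ s) 0 \<in> S \<Longrightarrow> 0 \<in> S" for s
    by (induction s) (auto intro: preimage)
  with t S(3) show False
    by blast
qed

text \<open>The closing strand starts in \<open>b_0\<close>, outside the submodule; since the braid carries strands in
  the submodule to strands in it along its permutation, which is transitive, no diagonal entry of
  the partial trace can involve the submodule.\<close>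

lemma braidop_closure_truncation_vanish:
  assumes "mdim V \<le> r" and "truncation V W" and "0 < mdim W" and "knot_braid n w"
    and l: "l \<in> idx (mdim V) (n - 1) - idx (mdim W) (n - 1)"
  shows "braidop r V n w (0 # l) (0 # l) = 0"
proof (rule ccontr)
  assume nonzero: "braidop r V n w (0 # l) (0 # l) \<noteq> 0"
  have valid: "valid_braid n w" and orbit: "{..<n} \<subseteq> range (\<lambda>m. (braid_perm w ^^ m) 0)"
    using assms(4) by (auto simp: knot_braid_def)
  have E: "mdim W < mdim V \<Longrightarrow> mE V (mdim W) = 0" and "mdim W \<le> mdim V"
    using assms(2) by (auto simp: truncation_def)
  then have x: "0 # l \<in> idx (mdim V) n"
    using l assms(3) valid by (intro Cons_0_mem_idx) (auto simp: valid_braid_def)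
  define S where "S = {m. m < n \<and> mdim W \<le> (0 # l) ! m}"
  have "S = {}"
  proof (rule permutes_invariant_subset_empty[OF braid_perm_permutes[OF valid] orbit])
    show "braid_perm w ` S \<subseteq> S"
      using braidop_submodule[OF assms(1) E valid x x nonzero]
        permutes_in_image[OF braid_perm_permutes[OF valid]]
      by (auto simp: S_def)
  qed (use assms(3) in \<open>auto simp: S_def\<close>)
  moreover from l obtain m where "m < n - 1" "mdim W \<le> l ! m"
    by (auto simp: mem_idx_iff not_less)
  then have "Suc m \<in> S"
    by (simp add: S_def)
  ultimately show False
    by simp
qed

lemma Tval_truncation:
  assumes "mdim V \<le> r" and "truncation V W" and "0 < mdim W" and "knot_braid n w"
  shows "Tval r n w W = Tval r n w V"
proof -
  have valid: "valid_braid n w"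
    using assms(4) by (simp add: knot_braid_def)
  then have n: "1 \<le> n"
    by (simp add: valid_braid_def)
  have W: "mdim W \<le> mdim V" "\<And>i. i < mdim W \<Longrightarrow> mwt W i = mwt V i"
    using assms(2) by (auto simp: truncation_def)
  have "Tval r n w V = (\<Sum>l\<in>idx (mdim W) (n - 1). braidop r V n w (0 # l) (0 # l)
                         * (\<Prod>m<n - 1. xi r ((1 - of_nat r) * mwt V (l ! m))))"
    unfolding Tval_def using braidop_closure_truncation_vanish[OF assms] idx_mono[OF W(1)]
    by (simp add: sum.mono_neutral_right[OF finite_idx])
  also have "\<dots> = Tval r n w W"
    unfolding Tval_def
  proof (rule sum.cong[OF refl])
    fix l assume l: "l \<in> idx (mdim W) (n - 1)"
    then have "0 # l \<in> idx (mdim W) n"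
      using n assms(3) by (intro Cons_0_mem_idx)
    moreover have "\<forall>m<n - 1. mwt V (l ! m) = mwt W (l ! m)"
      using l W(2) by (auto simp: mem_idx_iff)
    ultimately show "braidop r V n w (0 # l) (0 # l) * (\<Prod>m<n - 1. xi r ((1 - of_nat r) * mwt V (l ! m)))
        = braidop r W n w (0 # l) (0 # l) * (\<Prod>m<n - 1. xi r ((1 - of_nat r) * mwt W (l ! m)))"
      using braidop_truncation[OF assms(1,2) valid] by simp
  qed
  finally show ?thesis ..
qed

section \<open>Twisting by a one-dimensional module\<close>

lemma Smod_simps:
  "mdim (Smod r n) = n + 1" "mwt (Smod r n) i = of_nat n - 2 * of_nat i"
  "mE (Smod r n) i = curly r (of_nat i) * curly r (of_nat n + 1 - of_nat i) / (curly r 1) ^ 2"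
  by (simp_all add: Smod_def mdim_def mwt_def mE_def)

lemma Vmod_simps:
  "mdim (Vmod r a) = r" "mwt (Vmod r a) i = a + of_nat r - 1 - 2 * of_nat i"
  "mE (Vmod r a) i = curly r (of_nat i) * curly r (of_nat i - a) / (curly r 1) ^ 2"
  by (simp_all add: Vmod_def mdim_def mwt_def mE_def)

text \<open>\<open>S_n\<close> tensored with the one-dimensional module of weight \<open>r\<close>, on which \<open>K = \<xi>^r = -1\<close>;
  by \<open>\<Delta>E = 1 \<otimes> E + E \<otimes> K\<close> this negates the action of \<open>E\<close>.\<close>

definition Sshift :: "nat \<Rightarrow> nat \<Rightarrow> wmod" where
  "Sshift r n = (n + 1, \<lambda>i. of_nat n - 2 * of_nat i + of_nat r,
      \<lambda>i. - (curly r (of_nat i) * curly r (of_nat n + 1 - of_nat i) / (curly r 1) ^ 2))"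

lemma Sshift_simps:
  "mdim (Sshift r n) = n + 1" "mwt (Sshift r n) i = mwt (Smod r n) i + of_nat r"
  "mE (Sshift r n) i = - mE (Smod r n) i"
  by (simp_all add: Sshift_def Smod_def mdim_def mwt_def mE_def)

lemma Epow_uminus:
  assumes "\<And>i. mE M' i = - mE M i"
  shows "Epow M' m i = (-1) ^ m * Epow M m i"
proof -
  have "(\<Prod>k<m. mE M' (i - k)) = (\<Prod>k<m. (-1) * mE M (i - k))"
    using assms by simp
  also have "\<dots> = (-1) ^ m * (\<Prod>k<m. mE M (i - k))"
    by (simp only: prod.distrib prod_constant card_lessThan)
  finally show ?thesis
    unfolding Epow_def by simp
qed

lemma inverse_neg_one_power: "inverse ((-1 :: complex) ^ k) = (-1) ^ k"
  by (simp add: power_inverse[symmetric])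

lemma xi_shifted_weights:
  assumes "r > 0"
  shows "xi r ((of_nat n - 2 * of_nat b + of_nat r) * (of_nat n - 2 * of_nat a + of_nat r) / 2)
     = xi r ((of_nat n - 2 * of_nat b) * (of_nat n - 2 * of_nat a) / 2)
       * ((-1) ^ n * (-1) ^ (a + b) * xi r (of_nat r * of_nat r / 2))"
proof -
  have split: "(of_nat n - 2 * of_nat b + of_nat r) * (of_nat n - 2 * of_nat a + of_nat r) / 2
     = (of_nat n - 2 * of_nat b) * (of_nat n - 2 * of_nat a) / 2
       + (of_nat r * of_nat n + (- (of_nat r * of_nat (a + b)) + of_nat r * of_nat r / (2::complex)))"
    by (simp add: field_simps)
  have "xi r (- (of_nat r * of_nat (a + b))) = (-1) ^ (a + b)"
    using xi_of_nat_r_mult[OF assms, of "a + b"] by (simp add: xi_minus inverse_neg_one_power)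
  then show ?thesis
    unfolding split xi_add xi_of_nat_r_mult[OF assms] by (simp add: algebra_simps)
qed

definition shift_factor :: "nat \<Rightarrow> nat \<Rightarrow> complex" where
  "shift_factor r n = (-1) ^ n * xi r (of_nat r * of_nat r / 2)"

lemma shift_factor_nonzero: "shift_factor r n \<noteq> 0"
  by (simp add: shift_factor_def)

lemma cmat_Sshift:
  assumes "r > 0"
  shows "cmat r (Sshift r n) a b i j = shift_factor r n * (-1) ^ (b + j) * cmat r (Smod r n) a b i j"
proof (cases "a < n + 1 \<and> b < n + 1 \<and> i < n + 1 \<and> j < n + 1 \<and> j \<le> a \<and> i = b + (a - j) \<and> a - j < r")
  case True
  have "a - j + (a + b) = 2 * (a - j) + (b + j)"
    using True by auto
  then have "(-1 :: complex) ^ (a - j) * (-1) ^ (a + b) = (-1) ^ (2 * (a - j) + (b + j))"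
    by (simp only: power_add[symmetric])
  then have "(-1 :: complex) ^ (a - j) * (-1) ^ (a + b) = (-1) ^ (b + j)"
    by (simp add: power_add)
  with True show ?thesis
    unfolding cmat_def Sshift_simps Smod_simps(1) shift_factor_def
      Epow_uminus[OF Sshift_simps(3)] Smod_simps(2) xi_shifted_weights[OF assms]
    by (simp add: algebra_simps)
qed (auto simp: cmat_def Sshift_simps Smod_simps)

lemma cinv_explicit_Sshift:
  assumes "r > 0"
  shows "cinv_explicit r (Sshift r n) i j a b
           = inverse (shift_factor r n) * (-1) ^ (j + b) * cinv_explicit r (Smod r n) i j a b"
proof (cases "i < n + 1 \<and> j < n + 1 \<and> a < n + 1 \<and> b < n + 1 \<and> i \<le> b \<and> a \<le> j \<and> b - i = j - a")
  case True
  then have "j = a + (b - i)"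
    by auto
  then have "(-1 :: complex) ^ (b - i) * inverse ((-1) ^ (a + b)) = (-1) ^ (j + b)"
    by (simp add: inverse_neg_one_power power_add algebra_simps)
  with True show ?thesis
    unfolding cinv_explicit_def Sshift_simps Smod_simps(1) shift_factor_def
      Epow_uminus[OF Sshift_simps(3)] Smod_simps(2) xi_minus xi_shifted_weights[OF assms]
    by (simp add: algebra_simps inverse_neg_one_power)
qed (auto simp: cinv_explicit_def Sshift_simps Smod_simps)

definition strand_sign :: "nat list \<Rightarrow> complex" where
  "strand_sign x = (-1) ^ (\<Sum>m<length x. m * x ! m)"

lemma strand_sign_square: "strand_sign x * strand_sign x = 1"
  unfolding strand_sign_def by (simp add: power_add[symmetric] mult_2[symmetric] power_mult)

lemma strand_sign_mult:
  assumes "length out = n" "length inp = n" "k + 1 < n"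
    and same: "\<And>m. m < n \<Longrightarrow> m \<noteq> k \<Longrightarrow> m \<noteq> k + 1 \<Longrightarrow> out ! m = inp ! m"
    and "out ! k + out ! (k + 1) = inp ! k + inp ! (k + 1)"
  shows "strand_sign out * strand_sign inp = (-1) ^ (out ! (k + 1) + inp ! (k + 1))"
proof -
  define R where "R = {..<n} - {k, k + 1}"
  have split: "(\<Sum>m<n. m * x ! m) = k * x ! k + (k + 1) * x ! (k + 1) + (\<Sum>m\<in>R. m * x ! m)" for x
  proof -
    have "{..<n} = insert k (insert (k + 1) R)" "k \<notin> insert (k + 1) R" "k + 1 \<notin> R" "finite R"
      using assms(3) by (auto simp: R_def)
    then show ?thesis
      by (simp add: add.assoc)
  qed
  have "(\<Sum>m\<in>R. m * inp ! m) = (\<Sum>m\<in>R. m * out ! m)"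
    using same by (intro sum.cong) (auto simp: R_def)
  moreover have "k * (out ! k + out ! (k + 1)) = k * (inp ! k + inp ! (k + 1))"
    using assms(5) by simp
  ultimately have "(\<Sum>m<n. m * out ! m) + (\<Sum>m<n. m * inp ! m)
      = 2 * ((\<Sum>m\<in>R. m * out ! m) + k * (out ! k + out ! (k + 1))) + (out ! (k + 1) + inp ! (k + 1))"
    unfolding split by (simp add: algebra_simps)
  then have "strand_sign out * strand_sign inp
      = (-1) ^ (2 * ((\<Sum>m\<in>R. m * out ! m) + k * (out ! k + out ! (k + 1))) + (out ! (k + 1) + inp ! (k + 1)))"
    unfolding strand_sign_def assms(1,2) by (simp only: power_add[symmetric])
  then show ?thesis
    by (simp add: power_add power_mult)
qed

lemma genop_Sshift:
  assumes "r > 0" "n + 1 \<le> r"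
    and "out \<in> idx (n + 1) N" "inp \<in> idx (n + 1) N" "g \<noteq> 0" "\<bar>g\<bar> \<le> int N - 1"
  shows "genop r (Sshift r n) g out inp
           = (if g > 0 then shift_factor r n else inverse (shift_factor r n))
               * strand_sign out * strand_sign inp * genop r (Smod r n) g out inp"
proof -
  define k where "k = nat \<bar>g\<bar> - 1"
  have k: "k + 1 < N"
    using assms(5,6) by (auto simp: k_def)
  have length: "length out = N" "length inp = N"
    using assms(3,4) by (auto simp: mem_idx_iff)
  have bounds: "out ! k < n + 1" "out ! (k + 1) < n + 1" "inp ! k < n + 1" "inp ! (k + 1) < n + 1"
    using assms(3,4) k by (auto simp: mem_idx_iff)
  define c where "c = (if g > 0 then shift_factor r n else inverse (shift_factor r n))"
  define A where "A M = (if g > 0 then cmat r M else cinv r M) (out ! k) (out ! (k + 1)) (inp ! k) (inp ! (k + 1))"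
    for M
  have "cinv r M (out ! k) (out ! (k + 1)) (inp ! k) (inp ! (k + 1))
          = cinv_explicit r M (out ! k) (out ! (k + 1)) (inp ! k) (inp ! (k + 1))"
    if "M \<in> {Smod r n, Sshift r n}" for M
    using that bounds assms(2) by (intro cinv_eq_cinv_explicit) (auto simp: Smod_simps Sshift_simps)
  then have A_Sshift: "A (Sshift r n) = c * (-1) ^ (out ! (k + 1) + inp ! (k + 1)) * A (Smod r n)"
    unfolding A_def c_def using cmat_Sshift[OF assms(1)] cinv_explicit_Sshift[OF assms(1)]
    by (simp add: algebra_simps)
  have genop: "genop r M g out inp
      = (if \<forall>m<length out. m \<noteq> k \<and> m \<noteq> k + 1 \<longrightarrow> out ! m = inp ! m then A M else 0)" for M
    unfolding genop_def Let_def k_def A_def ..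
  show ?thesis
  proof (cases "genop r (Smod r n) g out inp = 0")
    case True
    then show ?thesis
      unfolding genop A_Sshift by (auto split: if_splits)
  next
    case False
    then have same: "\<And>m. m < N \<Longrightarrow> m \<noteq> k \<Longrightarrow> m \<noteq> k + 1 \<Longrightarrow> out ! m = inp ! m"
      and "A (Smod r n) \<noteq> 0"
      unfolding genop using length by (auto split: if_splits)
    then have "out ! k + out ! (k + 1) = inp ! k + inp ! (k + 1)"
      using cinv_eq_cinv_explicit[of "Smod r n" r] bounds assms(2)
      unfolding A_def cmat_def cinv_explicit_def by (auto simp: Smod_simps split: if_splits)
    then have sign: "strand_sign out * strand_sign inp = (-1) ^ (out ! (k + 1) + inp ! (k + 1))"
      using strand_sign_mult[OF length k same] by simp
    have cond: "\<forall>m<length out. m \<noteq> k \<and> m \<noteq> k + 1 \<longrightarrow> out ! m = inp ! m"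
      using same length by simp
    show ?thesis
      unfolding genop if_P[OF cond] A_Sshift c_def[symmetric] by (metis sign mult.assoc)
  qed
qed

lemma braidop_conjugate_scale:
  fixes \<kappa> :: "int \<Rightarrow> complex" and \<phi> :: "nat list \<Rightarrow> complex"
  assumes "mdim M' = mdim M" and "valid_braid n w"
    and gen: "\<And>g out y. g \<in> set w \<Longrightarrow> out \<in> idx (mdim M) n \<Longrightarrow> y \<in> idx (mdim M) n \<Longrightarrow>
                genop r M' g out y = \<kappa> g * \<phi> out * \<phi> y * genop r M g out y"
    and sq: "\<And>x. \<phi> x * \<phi> x = 1"
  shows "out \<in> idx (mdim M) n \<Longrightarrow> inp \<in> idx (mdim M) n \<Longrightarrow>
           braidop r M' n w out inp = prod_list (map \<kappa> w) * \<phi> out * \<phi> inp * braidop r M n w out inp"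
  using assms(2) gen
proof (induction w arbitrary: out)
  case Nil
  then show ?case using sq[of out] by auto
next
  case (Cons g w)
  have "braidop r M' n (g # w) out inp
      = (\<Sum>y\<in>idx (mdim M) n. (\<kappa> g * prod_list (map \<kappa> w) * \<phi> out * \<phi> inp)
           * ((\<phi> y * \<phi> y) * (genop r M g out y * braidop r M n w y inp)))"
    unfolding braidop.simps assms(1)
  proof (rule sum.cong[OF refl])
    fix y assume "y \<in> idx (mdim M) n"
    with Cons show "genop r M' g out y * braidop r M' n w y inp
        = (\<kappa> g * prod_list (map \<kappa> w) * \<phi> out * \<phi> inp) * ((\<phi> y * \<phi> y) * (genop r M g out y * braidop r M n w y inp))"
      by (simp add: valid_braid_Cons algebra_simps)
  qed
  then show ?case
    by (simp add: sq sum_distrib_left algebra_simps)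
qed

lemma prod_list_map_sign_eq_powi_writhe:
  fixes c :: complex
  assumes "c \<noteq> 0" "\<forall>g\<in>set w. g \<noteq> 0"
  shows "prod_list (map (\<lambda>g. if g > 0 then c else inverse c) w) = c powi writhe w"
  using assms(2)
proof (induction w)
  case (Cons g w)
  then have "writhe (g # w) = sgn g + writhe w" "g > 0 \<or> g < 0"
    by (auto simp: writhe_def)
  with Cons assms(1) show ?case
    by (auto simp: power_int_add power_int_diff power_int_1_right field_simps)
qed (simp add: writhe_def)

text \<open>Since the writhe vanishes the scalars of \<open>genop_Sshift\<close> cancel, and since \<open>n\<close> is odd the
  shift of the weights by \<open>r\<close> in the partial trace contributes \<open>(\<xi>^((1-r)r))^(n-1) = 1\<close>.\<close>

lemma Tval_Sshift:
  assumes "r > 0" "m + 1 \<le> r" and "valid_braid n w" "writhe w = 0" "odd n"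
  shows "Tval r n w (Sshift r m) = Tval r n w (Smod r m)"
proof -
  define \<kappa> where "\<kappa> g = (if g > 0 then shift_factor r m else inverse (shift_factor r m))" for g :: int
  have gen: "genop r (Sshift r m) g out y = \<kappa> g * strand_sign out * strand_sign y * genop r (Smod r m) g out y"
    if "g \<in> set w" "out \<in> idx (mdim (Smod r m)) n" "y \<in> idx (mdim (Smod r m)) n" for g out y
    using genop_Sshift[OF assms(1,2), of out n y g] that assms(3)
    by (simp add: Smod_simps \<kappa>_def valid_braid_def)
  have "prod_list (map \<kappa> w) = 1"
    using prod_list_map_sign_eq_powi_writhe[OF shift_factor_nonzero, of w r m] assms(3,4)
    by (simp add: \<kappa>_def[abs_def] valid_braid_def)
  then have braid: "braidop r (Sshift r m) n w (0 # l) (0 # l) = braidop r (Smod r m) n w (0 # l) (0 # l)"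
    if "l \<in> idx (m + 1) (n - 1)" for l
    using braidop_conjugate_scale[OF _ assms(3) gen strand_sign_square, of "0 # l" "0 # l"]
      strand_sign_square[of "0 # l"] that assms(3)
    by (simp add: Sshift_simps Smod_simps Cons_0_mem_idx valid_braid_def)
  have "even (n - 1)"
    using assms(5) by (simp add: odd_pos)
  then obtain t where "n - 1 = 2 * t" ..
  moreover have "(xi r ((1 - of_nat r) * of_nat r)) ^ 2 = 1"
    using assms(1) unfolding xi_power
    by (subst xi_eq_1_iff) (auto intro!: exI[of _ "1 - int r"] simp: algebra_simps)
  ultimately have "(xi r ((1 - of_nat r) * of_nat r)) ^ (n - 1) = 1"
    by (simp add: power_mult)
  then have "(\<Prod>i<n - 1. xi r ((1 - of_nat r) * mwt (Sshift r m) (l ! i)))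
               = (\<Prod>i<n - 1. xi r ((1 - of_nat r) * mwt (Smod r m) (l ! i)))" for l
    by (simp add: Sshift_simps distrib_left xi_add prod.distrib)
  with braid show ?thesis
    unfolding Tval_def Sshift_simps(1) Smod_simps(1) by (intro sum.cong) auto
qed

section \<open>Integer weights\<close>

lemma Tval_Vmod_of_nat:
  assumes "0 < q" "q < r" and "knot_braid n w" "writhe w = 0"
  shows "Tval r n w (Vmod r (of_nat q)) = Tval r n w (Smod r (q - 1))"
proof -
  have "truncation (Vmod r (of_nat q)) (Sshift r (q - 1))"
  proof -
    have "curly r (of_nat i - of_nat q) = - curly r (of_nat (q - 1) + 1 - of_nat i)" for i
      using assms(1) curly_minus[of r "of_nat i - of_nat q"] by (simp add: of_nat_diff)
    then show ?thesis
      using assms(1,2) by (simp add: truncation_def Vmod_simps Sshift_simps Smod_simps of_nat_diff)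
  qed
  then have "Tval r n w (Sshift r (q - 1)) = Tval r n w (Vmod r (of_nat q))"
    using assms by (intro Tval_truncation) (auto simp: Vmod_simps Sshift_simps)
  moreover have "Tval r n w (Sshift r (q - 1)) = Tval r n w (Smod r (q - 1))"
    using assms knot_braid_odd_strands[OF assms(3,4)]
    by (intro Tval_Sshift) (auto simp: knot_braid_def)
  ultimately show ?thesis
    by simp
qed

lemma Tval_Vmod_of_nat_minus_r:
  assumes "0 < q" "q < r" and "knot_braid n w"
  shows "Tval r n w (Vmod r (of_nat q - of_nat r)) = Tval r n w (Smod r (q - 1))"
proof -
  have "curly r (of_nat i - (of_nat q - of_nat r)) = curly r (of_nat q - of_nat i)" for i
    using curly_add_of_nat_r[of r "of_nat i - of_nat q"] curly_minus[of r "of_nat q - of_nat i"] assms(2)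
    by (simp add: algebra_simps)
  then have "truncation (Vmod r (of_nat q - of_nat r)) (Smod r (q - 1))"
    using assms(1,2) curly_of_nat_r[of r]
    by (simp add: truncation_def Vmod_simps Smod_simps of_nat_diff)
  then show ?thesis
    using assms by (intro Tval_truncation[symmetric]) (auto simp: Vmod_simps Smod_simps)
qed

definition CGP_summand :: "nat \<Rightarrow> nat \<Rightarrow> int list \<Rightarrow> int \<Rightarrow> complex" where
  "CGP_summand r n w c = (curly r (of_int c)) ^ 2 / (curly r 1) ^ 2 * Tval r n w (Vmod r (of_int c))"

definition WRT_summand :: "nat \<Rightarrow> nat \<Rightarrow> int list \<Rightarrow> nat \<Rightarrow> complex" where
  "WRT_summand r n w j = (curly r (of_nat j + 1)) ^ 2 / (curly r 1) ^ 2 * Tval r n w (Smod r j)"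

lemma CGP_summand_pos:
  assumes "0 < c" "c < int r" and "knot_braid n w" "writhe w = 0"
  shows "CGP_summand r n w c = WRT_summand r n w (nat c - 1)"
proof -
  have "of_int c = (of_nat (nat c) :: complex)" "of_nat (nat c - 1) + 1 = (of_int c :: complex)"
    using assms(1) by (simp_all add: of_nat_diff)
  then show ?thesis
    unfolding CGP_summand_def WRT_summand_def using assms Tval_Vmod_of_nat[of "nat c" r n w]
    by simp
qed

lemma CGP_summand_neg:
  assumes "r > 0" "c < 0" "- int r < c" and "knot_braid n w"
  shows "CGP_summand r n w c = WRT_summand r n w (nat (c + int r) - 1)"
proof -
  have "of_int c = (of_nat (nat (c + int r)) - of_nat r :: complex)"
    "of_nat (nat (c + int r) - 1) + 1 = (of_int c + of_nat r :: complex)"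
    using assms(2,3) by (simp_all add: of_nat_diff)
  moreover have "(curly r (of_int c + of_nat r)) ^ 2 = (curly r (of_int c)) ^ 2"
    using curly_add_of_nat_r[OF assms(1)] by simp
  ultimately show ?thesis
    unfolding CGP_summand_def WRT_summand_def
    using assms Tval_Vmod_of_nat_minus_r[of "nat (c + int r)" r n w] by simp
qed

lemma CGP_summand_0: "CGP_summand r n w 0 = 0"
  by (simp add: CGP_summand_def)

lemma CGP_summand_r: "r > 0 \<Longrightarrow> CGP_summand r n w (int r) = 0"
  by (simp add: CGP_summand_def curly_of_nat_r)

lemma mem_Hr_iff: "k \<in> Hr r \<longleftrightarrow> - int r < k \<and> k < int r \<and> odd (k + int r)"
proof
  assume k: "- int r < k \<and> k < int r \<and> odd (k + int r)"
  then obtain m where m: "k + int r = 2 * m + 1"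
    by (meson oddE)
  moreover have "0 \<le> m" "m < int r"
    using k m by auto
  ultimately show "k \<in> Hr r"
    unfolding Hr_def by (intro image_eqI[of _ _ "nat m"]) auto
qed (auto simp: Hr_def)
lemma sum_CGP_summand_positive:
  assumes "r \<ge> 2" "\<delta> \<le> 1" and "knot_braid n w" "writhe w = 0"
  shows "(\<Sum>k\<in>{k \<in> Hr r. 0 < k + int \<delta> \<and> k + int \<delta> < int r}. CGP_summand r n w (k + int \<delta>))
           = (\<Sum>j\<in>{j\<in>{0..r-2}. even (j + r + \<delta>)}. WRT_summand r n w j)"
proof (rule sum.reindex_bij_witness[where i = "\<lambda>j. int j + 1 - int \<delta>" and j = "\<lambda>k. nat (k + int \<delta> - 1)"])
  fix k assume "k \<in> {k \<in> Hr r. 0 < k + int \<delta> \<and> k + int \<delta> < int r}"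
  then have k: "odd (k + int r)" "0 < k + int \<delta>" "k + int \<delta> < int r"
    by (auto simp: mem_Hr_iff)
  then have j: "int (nat (k + int \<delta> - 1)) = k + int \<delta> - 1"
    by simp
  then show "int (nat (k + int \<delta> - 1)) + 1 - int \<delta> = k"
    by simp
  have "even (int (nat (k + int \<delta> - 1)) + int r + int \<delta>)"
    unfolding j using k(1) by presburger
  then have "even (nat (k + int \<delta> - 1) + r + \<delta>)"
    by (simp only: of_nat_add[symmetric] even_of_nat_iff)
  moreover have "nat (k + int \<delta> - 1) \<le> r - 2"
    using j k(3) by arith
  ultimately show "nat (k + int \<delta> - 1) \<in> {j\<in>{0..r-2}. even (j + r + \<delta>)}"
    by simp
  have "nat (k + int \<delta> - 1) = nat (k + int \<delta>) - 1"
    by simp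
  then show "WRT_summand r n w (nat (k + int \<delta> - 1)) = CGP_summand r n w (k + int \<delta>)"
    using k assms by (simp add: CGP_summand_pos)
next
  fix j assume "j \<in> {j\<in>{0..r-2}. even (j + r + \<delta>)}"
  then have "j \<le> r - 2" "even (int j + int r + int \<delta>)"
    by auto
  then show "int j + 1 - int \<delta> \<in> {k \<in> Hr r. 0 < k + int \<delta> \<and> k + int \<delta> < int r}"
    unfolding mem_Collect_eq mem_Hr_iff using assms(1,2) by presburger
qed simp

lemma sum_CGP_summand_negative:
  assumes "r \<ge> 2" "\<delta> \<le> 1" and "knot_braid n w"
  shows "(\<Sum>k\<in>{k \<in> Hr r. k + int \<delta> < 0}. CGP_summand r n w (k + int \<delta>))
           = (\<Sum>j\<in>{j\<in>{0..r-2}. even (j + \<delta>)}. WRT_summand r n w j)"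
proof (rule sum.reindex_bij_witness[where i = "\<lambda>j. int j + 1 - int r - int \<delta>"
      and j = "\<lambda>k. nat (k + int \<delta> + int r - 1)"])
  fix k assume "k \<in> {k \<in> Hr r. k + int \<delta> < 0}"
  then have k: "- int r < k" "odd (k + int r)" "k + int \<delta> < 0"
    by (auto simp: mem_Hr_iff)
  then have j: "int (nat (k + int \<delta> + int r - 1)) = k + int \<delta> + int r - 1"
    by simp
  then show "int (nat (k + int \<delta> + int r - 1)) + 1 - int r - int \<delta> = k"
    by simp
  have "even (int (nat (k + int \<delta> + int r - 1)) + int \<delta>)"
    unfolding j using k(2) by presburger
  then have "even (nat (k + int \<delta> + int r - 1) + \<delta>)"
    by (simp only: of_nat_add[symmetric] even_of_nat_iff)
  moreover have "nat (k + int \<delta> + int r - 1) \<le> r - 2"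
    using j k(3) by arith
  ultimately show "nat (k + int \<delta> + int r - 1) \<in> {j\<in>{0..r-2}. even (j + \<delta>)}"
    by simp
  have "nat (k + int \<delta> + int r - 1) = nat (k + int \<delta> + int r) - 1"
    by simp
  then show "WRT_summand r n w (nat (k + int \<delta> + int r - 1)) = CGP_summand r n w (k + int \<delta>)"
    using k assms by (simp add: CGP_summand_neg)
next
  fix j assume "j \<in> {j\<in>{0..r-2}. even (j + \<delta>)}"
  then have "j \<le> r - 2" "even (int j + int \<delta>)"
    by auto
  then show "int j + 1 - int r - int \<delta> \<in> {k \<in> Hr r. k + int \<delta> < 0}"
    unfolding mem_Collect_eq mem_Hr_iff using assms(1,2) by presburger
qed simp

lemma sum_Hr_CGP_summand:
  assumes "r \<ge> 2" "\<delta> \<le> 1" and "knot_braid n w" "writhe w = 0"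
  shows "(\<Sum>k\<in>Hr r. CGP_summand r n w (k + int \<delta>))
           = (\<Sum>j\<in>{j\<in>{0..r-2}. even (j + r + \<delta>)}. WRT_summand r n w j)
             + (\<Sum>j\<in>{j\<in>{0..r-2}. even (j + \<delta>)}. WRT_summand r n w j)"
proof -
  define f where "f k = CGP_summand r n w (k + int \<delta>)" for k
  define P where "P = {k \<in> Hr r. 0 < k + int \<delta> \<and> k + int \<delta> < int r}"
  define N where "N = {k \<in> Hr r. k + int \<delta> < 0}"
  have "finite (Hr r)"
    by (simp add: Hr_def)
  have "(\<Sum>k\<in>Hr r. f k) = (\<Sum>k\<in>P \<union> N. f k)"
  proof (rule sum.mono_neutral_right[OF \<open>finite (Hr r)\<close>])
    show "\<forall>k\<in>Hr r - (P \<union> N). f k = 0"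
    proof
      fix k assume "k \<in> Hr r - (P \<union> N)"
      then have "k + int \<delta> = 0 \<or> k + int \<delta> = int r"
        using assms(2) by (auto simp: P_def N_def mem_Hr_iff)
      then show "f k = 0"
        using assms(1) CGP_summand_0 CGP_summand_r by (auto simp: f_def)
    qed
  qed (auto simp: P_def N_def)
  also have "\<dots> = (\<Sum>k\<in>P. f k) + (\<Sum>k\<in>N. f k)"
    using \<open>finite (Hr r)\<close> by (intro sum.union_disjoint) (auto simp: P_def N_def)
  finally show ?thesis
    unfolding f_def P_def N_def using sum_CGP_summand_positive[OF assms] sum_CGP_summand_negative[OF assms(1-3)]
    by simp
qed

section \<open>The limit\<close>

lemma isCont_xi: "isCont f x \<Longrightarrow> isCont (\<lambda>b. xi r (f b)) x"
  unfolding xi_def divide_inverse by (intro continuous_intros)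

lemma isCont_curly: "isCont f x \<Longrightarrow> isCont (\<lambda>b. curly r (f b)) x"
  unfolding curly_def by (intro continuous_intros isCont_xi)

lemma isCont_if_const: "(P \<Longrightarrow> isCont f x) \<Longrightarrow> isCont (\<lambda>b. if P then f b else c) x"
  by (cases P) auto

lemma isCont_mE_Vmod: "isCont (\<lambda>b. mE (Vmod r b) t) x"
  unfolding Vmod_simps divide_inverse by (intro continuous_intros isCont_curly)

lemma isCont_mwt_Vmod: "isCont (\<lambda>b. mwt (Vmod r b) t) x"
  unfolding Vmod_simps by (intro continuous_intros)

lemma isCont_Epow_Vmod: "isCont (\<lambda>b. Epow (Vmod r b) m i) x"
  unfolding Epow_def by (intro isCont_if_const continuous_intros isCont_mE_Vmod)

lemma isCont_cmat_Vmod: "isCont (\<lambda>b. cmat r (Vmod r b) a c i j) x"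
  unfolding cmat_def Vmod_simps(1) divide_inverse
  by (intro isCont_if_const continuous_intros isCont_Epow_Vmod isCont_xi isCont_mwt_Vmod)

lemma isCont_cinv_Vmod:
  assumes "a < r" "c < r" "i < r" "j < r"
  shows "isCont (\<lambda>b. cinv r (Vmod r b) a c i j) x"
proof -
  have "cinv r (Vmod r b) a c i j = cinv_explicit r (Vmod r b) a c i j" for b
    using assms by (intro cinv_eq_cinv_explicit) (auto simp: Vmod_simps)
  then show ?thesis
    unfolding cinv_explicit_def Vmod_simps(1) divide_inverse
    by (simp only:) (intro isCont_if_const continuous_intros isCont_Epow_Vmod isCont_xi isCont_mwt_Vmod)
qed

lemma isCont_genop_Vmod:
  assumes "out \<in> idx r n" "inp \<in> idx r n" and "g \<noteq> 0" "\<bar>g\<bar> \<le> int n - 1"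
  shows "isCont (\<lambda>b. genop r (Vmod r b) g out inp) x"
proof -
  define k where "k = nat \<bar>g\<bar> - 1"
  have "k + 1 < n"
    using assms(3,4) by (auto simp: k_def)
  then have "out ! k < r" "out ! (k + 1) < r" "inp ! k < r" "inp ! (k + 1) < r"
    using assms(1,2) by (auto simp: mem_idx_iff)
  then show ?thesis
    unfolding genop_def Let_def k_def[symmetric]
    by (intro isCont_if_const) (cases "g > 0", simp_all add: isCont_cmat_Vmod isCont_cinv_Vmod)
qed

lemma isCont_braidop_Vmod:
  assumes "valid_braid n w"
  shows "out \<in> idx r n \<Longrightarrow> inp \<in> idx r n \<Longrightarrow> isCont (\<lambda>b. braidop r (Vmod r b) n w out inp) x"
  using assms
proof (induction w arbitrary: out)
  case (Cons g w)
  then have "valid_braid n w" "g \<noteq> 0" "\<bar>g\<bar> \<le> int n - 1"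
    by (auto simp: valid_braid_Cons)
  with Cons show ?case
    unfolding braidop.simps Vmod_simps(1)
    by (intro continuous_intros isCont_genop_Vmod Cons.IH) auto
qed simp

lemma isCont_Tval_Vmod:
  assumes "valid_braid n w" "0 < r"
  shows "isCont (\<lambda>b. Tval r n w (Vmod r b)) x"
proof -
  have "1 \<le> n"
    using assms(1) by (simp add: valid_braid_def)
  with assms show ?thesis
    unfolding Tval_def Vmod_simps(1)
    by (intro continuous_intros isCont_braidop_Vmod isCont_xi isCont_mwt_Vmod) (auto intro: Cons_0_mem_idx)
qed

lemma qnum_r_mult_nonzero:
  assumes "r \<ge> 2" "\<alpha> \<notin> \<int>"
  shows "qnum r (of_nat r * \<alpha>) \<noteq> 0"
proof
  assume "qnum r (of_nat r * \<alpha>) = 0"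
  moreover have "curly r 1 \<noteq> 0"
    using curly_of_nat_nonzero[of 1 r] assms(1) by simp
  ultimately obtain k :: int where "of_nat r * \<alpha> = of_nat r * of_int k"
    using curly_eq_0_iff[of r] assms(1) by (auto simp: qnum_def)
  with assms show False
    by simp
qed

lemma tendsto_qnum_sq_CGP:
  assumes "r \<ge> 2" and "valid_braid n w"
  shows "((\<lambda>\<alpha>. (qnum r (of_nat r * \<alpha>)) ^ 2 * CGP r n w \<alpha>)
           \<longlongrightarrow> (\<Sum>k\<in>Hr r. (curly r (a + of_int k)) ^ 2 / (curly r 1) ^ 2 * Tval r n w (Vmod r (a + of_int k))))
           (at a within - \<int>)"
proof -
  define F where "F \<alpha> = (\<Sum>k\<in>Hr r. (curly r (\<alpha> + of_int k)) ^ 2 / (curly r 1) ^ 2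
                          * Tval r n w (Vmod r (\<alpha> + of_int k)))" for \<alpha>
  have Tval: "isCont (\<lambda>b. Tval r n w (Vmod r b)) x" for x
    using isCont_Tval_Vmod[OF assms(2)] assms(1) by simp
  have "isCont F a"
    unfolding F_def divide_inverse
  proof (intro continuous_intros isCont_curly)
    fix k :: int
    show "isCont (\<lambda>b. Tval r n w (Vmod r (b + of_int k))) a"
      by (rule isCont_o2[OF _ Tval]) (intro continuous_intros)
  qed
  then have "(F \<longlongrightarrow> F a) (at a within - \<int>)"
    unfolding isCont_def by (rule tendsto_within_subset) simp
  moreover have "F \<alpha> = (qnum r (of_nat r * \<alpha>)) ^ 2 * CGP r n w \<alpha>" if "\<alpha> \<in> - \<int>" for \<alpha>
    using qnum_r_mult_nonzero[OF assms(1), of \<alpha>] that unfolding CGP_def F_def by simp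
  then have "eventually (\<lambda>\<alpha>. F \<alpha> = (qnum r (of_nat r * \<alpha>)) ^ 2 * CGP r n w \<alpha>) (at a within - \<int>)"
    unfolding eventually_at_filter by (intro always_eventually) auto
  ultimately show ?thesis
    unfolding F_def by (rule tendsto_cong[THEN iffD1, rotated])
qed

lemma tendsto_qnum_sq_CGP_of_nat:
  assumes "r \<ge> 2" "\<delta> \<le> 1" and "knot_braid n w" "writhe w = 0"
  shows "((\<lambda>\<alpha>. (qnum r (of_nat r * \<alpha>)) ^ 2 * CGP r n w \<alpha>)
           \<longlongrightarrow> (\<Sum>j\<in>{j\<in>{0..r-2}. even (j + r + \<delta>)}. WRT_summand r n w j)
               + (\<Sum>j\<in>{j\<in>{0..r-2}. even (j + \<delta>)}. WRT_summand r n w j))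
           (at (of_nat \<delta>) within - \<int>)"
proof -
  have "valid_braid n w"
    using assms(3) by (simp add: knot_braid_def)
  moreover have "CGP_summand r n w (k + int \<delta>) = (curly r (of_nat \<delta> + of_int k)) ^ 2 / (curly r 1) ^ 2
                   * Tval r n w (Vmod r (of_nat \<delta> + of_int k))" for k
    by (simp add: CGP_summand_def add.commute)
  ultimately show ?thesis
    using tendsto_qnum_sq_CGP[OF assms(1), of n w "of_nat \<delta>"] sum_Hr_CGP_summand[OF assms] by simp
qed

lemma Dconst_nonzero:
  assumes "r \<ge> 2"
  shows "Dconst r \<noteq> 0"
proof -
  have "sin (pi / real r) > 0"
    using assms by (intro sin_gt_zero) (auto simp: field_simps)
  with assms show ?thesis
    by (simp add: Dconst_def)
qed

lemma Dconst_sq_WRTspin: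
  assumes "r \<ge> 2"
  shows "(complex_of_real (Dconst r)) ^ 2 * WRTspin r n w i
           = (\<Sum>j\<in>{j\<in>{0..r-2}. j mod 2 = i}. WRT_summand r n w j)"
  using Dconst_nonzero[OF assms] by (simp add: WRTspin_def WRT_summand_def)

lemma Dconst_sq_WRT:
  assumes "r \<ge> 2"
  shows "(complex_of_real (Dconst r)) ^ 2 * WRT r n w = (\<Sum>j\<in>{0..r-2}. WRT_summand r n w j)"
  using Dconst_nonzero[OF assms] by (simp add: WRT_def WRT_summand_def)

lemma sum_odd_plus_sum_even:
  fixes f :: "nat \<Rightarrow> 'a::comm_monoid_add"
  assumes "finite A"
  shows "(\<Sum>j\<in>{j\<in>A. odd j}. f j) + (\<Sum>j\<in>{j\<in>A. even j}. f j) = sum f A"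
proof -
  have "sum f A = sum f ({j\<in>A. odd j} \<union> {j\<in>A. even j})"
    by (rule arg_cong[where f = "sum f"]) auto
  also have "\<dots> = (\<Sum>j\<in>{j\<in>A. odd j}. f j) + (\<Sum>j\<in>{j\<in>A. even j}. f j)"
    using assms by (intro sum.union_disjoint) auto
  finally show ?thesis ..
qed

lemma sum_WRT_summand_parities_odd:
  assumes "r \<ge> 2" "odd r"
  shows "(\<Sum>j\<in>{j\<in>{0..r-2}. even (j + r + 0)}. WRT_summand r n w j)
           + (\<Sum>j\<in>{j\<in>{0..r-2}. even (j + 0)}. WRT_summand r n w j)
         = (complex_of_real (Dconst r)) ^ 2 * WRT r n w"
proof -
  have "{j\<in>{0..r-2}. even (j + r + 0)} = {j\<in>{0..r-2}. odd j}"
    "{j\<in>{0..r-2}. even (j + 0)} = {j\<in>{0..r-2}. even j}"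
    using assms(2) by auto
  then show ?thesis
    by (simp only: sum_odd_plus_sum_even finite_atLeastAtMost Dconst_sq_WRT[OF assms(1)])
qed

lemma sum_WRT_summand_parities_even:
  assumes "r \<ge> 2" "even r" "\<delta> \<le> 1"
  shows "(\<Sum>j\<in>{j\<in>{0..r-2}. even (j + r + \<delta>)}. WRT_summand r n w j)
           + (\<Sum>j\<in>{j\<in>{0..r-2}. even (j + \<delta>)}. WRT_summand r n w j)
         = 2 * (complex_of_real (Dconst r)) ^ 2 * WRTspin r n w \<delta>"
proof -
  have "even (j + r + \<delta>) \<longleftrightarrow> j mod 2 = \<delta>" "even (j + \<delta>) \<longleftrightarrow> j mod 2 = \<delta>" for j
    using assms(2,3) by presburger+
  then show ?thesis
    by (simp only: mult_2 distrib_right Dconst_sq_WRTspin[OF assms(1)])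
qed

theorem mainTheorem3:
  fixes r n :: nat and w :: "int list"
  assumes "r \<ge> 2" and "\<not> 4 dvd r"
    and "knot_braid n w" and "writhe w = 0"
  shows "(odd r \<longrightarrow>
            ((\<lambda>\<alpha>. (qnum r (of_nat r * \<alpha>))^2 * CGP r n w \<alpha>) \<longlongrightarrow>
               (complex_of_real (Dconst r))^2 * WRT r n w) (at 0 within - \<int>))
       \<and> (even r \<longrightarrow>
            ((\<lambda>\<alpha>. (qnum r (of_nat r * \<alpha>))^2 * CGP r n w \<alpha>) \<longlongrightarrow>
               2 * (complex_of_real (Dconst r))^2 * WRTspin r n w 0) (at 0 within - \<int>)
          \<and> ((\<lambda>\<alpha>. (qnum r (of_nat r * \<alpha>))^2 * CGP r n w \<alpha>) \<longlongrightarrow>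
               2 * (complex_of_real (Dconst r))^2 * WRTspin r n w 1) (at 1 within - \<int>))"
proof (intro conjI impI)
  note limit = tendsto_qnum_sq_CGP_of_nat[OF assms(1) _ assms(3,4)]
  assume "odd r"
  then show "((\<lambda>\<alpha>. (qnum r (of_nat r * \<alpha>))^2 * CGP r n w \<alpha>) \<longlongrightarrow>
               (complex_of_real (Dconst r))^2 * WRT r n w) (at 0 within - \<int>)"
    using limit[OF le0] by (simp only: sum_WRT_summand_parities_odd[OF assms(1) \<open>odd r\<close>] of_nat_0)
next
  note limit = tendsto_qnum_sq_CGP_of_nat[OF assms(1) _ assms(3,4)]
  assume "even r"
  note limit_value = sum_WRT_summand_parities_even[OF assms(1) \<open>even r\<close>]
  show "((\<lambda>\<alpha>. (qnum r (of_nat r * \<alpha>))^2 * CGP r n w \<alpha>) \<longlongrightarrow>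
               2 * (complex_of_real (Dconst r))^2 * WRTspin r n w 0) (at 0 within - \<int>)"
    using limit[OF le0] by (simp only: limit_value[OF le0] of_nat_0)
  show "((\<lambda>\<alpha>. (qnum r (of_nat r * \<alpha>))^2 * CGP r n w \<alpha>) \<longlongrightarrow>
               2 * (complex_of_real (Dconst r))^2 * WRTspin r n w 1) (at 1 within - \<int>)"
    using limit[OF order_refl] by (simp only: limit_value[OF order_refl] of_nat_1)
qed

end
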